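(* Let $\mathcal{H}$ be a complex separable Hilbert space and let $A$ be a bounded, self-adjoint, injective, non-invertible operator on $\mathcal{H}$ with cyclic multiplicity $N \in \mathbb{N}\cup\{+\infty\}$. Then for any $M \in \mathbb{N}\cup\{+\infty\}$ with $M \ge N$, there is an orthogonal decomposition $\mathcal{H} = \bigoplus_{j=1}^M \mathcal{K}_j$ into closed subspaces invariant under $A$ such that $A = \bigoplus_{j=1}^M A_j$ with $A_j = A|_{\mathcal{K}_j}$, where each $A_j$ is self-adjoint, injective and not invertible.
   Context: A self-adjoint $A$ has cyclic multiplicity $N$ if $N$ is the minimal number such that there is an orthonormal set $\{h_k\}_{k=1}^N$ with $\mathcal{H} = \bigoplus_{k=1}^N \mathcal{H}_k$ (orthogonal sum), where $\mathcal{H}_k$ is the closed linear span of $\{A^j h_k : j\ge 0\}$. *)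

theory Defs
  imports "HOL-Analysis.Analysis" "HOL-Library.Extended_Nat"
begin

text \<open>The library has no complex inner product spaces, so we introduce the class of
complex Hilbert spaces: a real Banach space with a compatible complex scalar
multiplication and a complex inner product (conjugate-linear in the first argument)
inducing the norm.\<close>

class complex_hilbert = banach +
  fixes scaleC :: "complex \<Rightarrow> 'a \<Rightarrow> 'a"
    and cinner :: "'a \<Rightarrow> 'a \<Rightarrow> complex"
  assumes scaleC_add_right: "scaleC c (x + y) = scaleC c x + scaleC c y"
    and scaleC_add_left: "scaleC (c + d) x = scaleC c x + scaleC d x"
    and scaleC_scaleC: "scaleC c (scaleC d x) = scaleC (c * d) x"
    and scaleC_one: "scaleC 1 x = x"
    and scaleR_scaleC: "scaleR r x = scaleC (complex_of_real r) x"
    and cinner_add_left: "cinner (x + y) z = cinner x z + cinner y z"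
    and cinner_scaleC_left: "cinner (scaleC c x) y = cnj c * cinner x y"
    and cinner_commute: "cinner y x = cnj (cinner x y)"
    and cinner_self_real: "Im (cinner x x) = 0"
    and cinner_self_nonneg: "0 \<le> Re (cinner x x)"
    and norm_eq_sqrt_cinner: "norm x = sqrt (Re (cinner x x))"

definition separable_space :: "'a::topological_space itself \<Rightarrow> bool" where
  "separable_space _ \<longleftrightarrow> (\<exists>D::'a set. countable D \<and> closure D = UNIV)"

definition cspan :: "'a::complex_hilbert set \<Rightarrow> 'a set" where
  "cspan S = {\<Sum>v\<in>T. scaleC (c v) v | T c. finite T \<and> T \<subseteq> S}"

definition closed_csubspace :: "'a::complex_hilbert set \<Rightarrow> bool" where
  "closed_csubspace K \<longleftrightarrow> closed K \<and> 0 \<in> K \<and> (\<forall>x\<in>K. \<forall>y\<in>K. x + y \<in> K)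
     \<and> (\<forall>c. \<forall>x\<in>K. scaleC c x \<in> K)"

definition bounded_clinear_on :: "'a::complex_hilbert set \<Rightarrow> ('a \<Rightarrow> 'a) \<Rightarrow> bool" where
  "bounded_clinear_on K T \<longleftrightarrow>
     (\<forall>x\<in>K. \<forall>y\<in>K. T (x + y) = T x + T y) \<and> (\<forall>c. \<forall>x\<in>K. T (scaleC c x) = scaleC c (T x))
     \<and> (\<exists>C. \<forall>x\<in>K. norm (T x) \<le> C * norm x)"

definition self_adjoint_on :: "'a::complex_hilbert set \<Rightarrow> ('a \<Rightarrow> 'a) \<Rightarrow> bool" where
  "self_adjoint_on K T \<longleftrightarrow> (\<forall>x\<in>K. \<forall>y\<in>K. cinner (T x) y = cinner x (T y))"

definition invertible_on :: "'a::complex_hilbert set \<Rightarrow> ('a \<Rightarrow> 'a) \<Rightarrow> bool" where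
  "invertible_on K T \<longleftrightarrow> (\<exists>B. bounded_clinear_on K B \<and> (\<forall>y\<in>K. B y \<in> K \<and> T (B y) = y)
     \<and> (\<forall>x\<in>K. B (T x) = x))"

definition cyclic_subspace :: "('a::complex_hilbert \<Rightarrow> 'a) \<Rightarrow> 'a \<Rightarrow> 'a set" where
  "cyclic_subspace T h = closure (cspan {(T ^^ j) h | j. True})"

definition orthogonal_sum :: "(nat \<Rightarrow> 'a::complex_hilbert set) \<Rightarrow> nat set \<Rightarrow> bool" where
  "orthogonal_sum K I \<longleftrightarrow>
     (\<forall>k\<in>I. \<forall>l\<in>I. k \<noteq> l \<longrightarrow> (\<forall>x\<in>K k. \<forall>y\<in>K l. cinner x y = 0))
     \<and> closure (cspan (\<Union>k\<in>I. K k)) = UNIV"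

text \<open>Index set {1..N} for N \<in> \<nat> \<union> {\<infinity>}, realised as {k. k < N} (0-based).\<close>
definition idx :: "enat \<Rightarrow> nat set" where
  "idx N = {k. enat k < N}"

definition cyclic_decomposition :: "('a::complex_hilbert \<Rightarrow> 'a) \<Rightarrow> enat \<Rightarrow> (nat \<Rightarrow> 'a) \<Rightarrow> bool" where
  "cyclic_decomposition T N h \<longleftrightarrow>
     (\<forall>k\<in>idx N. norm (h k) = 1) \<and> (\<forall>k\<in>idx N. \<forall>l\<in>idx N. k \<noteq> l \<longrightarrow> cinner (h k) (h l) = 0)
     \<and> orthogonal_sum (\<lambda>k. cyclic_subspace T (h k)) (idx N)"

definition cyclic_multiplicity :: "('a::complex_hilbert \<Rightarrow> 'a) \<Rightarrow> enat \<Rightarrow> bool" where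
  "cyclic_multiplicity T N \<longleftrightarrow> (\<exists>h. cyclic_decomposition T N h)
     \<and> (\<forall>M. (\<exists>h. cyclic_decomposition T M h) \<longrightarrow> N \<le> M)"

end

(* Without a spectral theorem the relevant spectral subspaces are built by hand. For a level e,
   let G(e) be the kernel of the positive part of A^2 - e, obtained from the operator absolute
   value, i.e. from a square root computed by the classical monotone iteration. Then G(e) is a
   closed subspace invariant under every operator commuting with A, with |Ax|^2 <= e |x|^2 on
   G(e) and the reverse inequality on its orthogonal complement. Non-invertibility makes G(e)
   nontrivial for every e > 0, injectivity makes the G(e) shrink to 0, so there are levels e_n
   decreasing to 0 whose layers, G(e_n) intersected with the orthogonal complement of
   G(e_(n+1)), are nonzero, mutually orthogonal and A-invariant. Distributing the layers among
   the M pieces so that each piece receives infinitely many of them gives invariant pieces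
   containing vectors with arbitrarily small |Ax| / |x|, so no restriction of A is invertible.
   The cyclic multiplicity only serves to exclude M = 0. *)

theory Submission
  imports Defs
begin

section \<open>Elementary geometry of complex Hilbert spaces\<close>

lemma scaleC_zero_right [simp]: "scaleC c (0::'a::complex_hilbert) = 0"
  using scaleC_add_right[of c "0::'a" 0] by simp

lemma scaleC_zero_left [simp]: "scaleC 0 (x::'a::complex_hilbert) = 0"
  using scaleC_add_left[of 0 0 x] by simp

lemma scaleC_minus_right: "scaleC c (- (x::'a::complex_hilbert)) = - scaleC c x"
  using scaleC_add_right[of c x "-x"] by (simp add: add.inverse_unique)

lemma scaleC_diff_right: "scaleC c ((x::'a::complex_hilbert) - y) = scaleC c x - scaleC c y"
  by (metis diff_conv_add_uminus scaleC_add_right scaleC_minus_right)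

lemma scaleC_sum_right: "scaleC c (sum f A) = (\<Sum>i\<in>A. scaleC c (f i :: 'a::complex_hilbert))"
  by (induction A rule: infinite_finite_induct) (auto simp: scaleC_add_right)

lemma cinner_add_right: "cinner (x::'a::complex_hilbert) (y + z) = cinner x y + cinner x z"
  by (metis cinner_commute cinner_add_left complex_cnj_add)

lemma cinner_scaleC_right: "cinner (x::'a::complex_hilbert) (scaleC c y) = c * cinner x y"
  by (metis cinner_commute cinner_scaleC_left complex_cnj_cnj complex_cnj_mult)

lemma cinner_zero_left [simp]: "cinner 0 (x::'a::complex_hilbert) = 0"
  using cinner_add_left[of 0 0 x] by simp

lemma cinner_zero_right [simp]: "cinner (x::'a::complex_hilbert) 0 = 0"
  using cinner_add_right[of x 0 0] by simp

lemma cinner_minus_left: "cinner (- x) (y::'a::complex_hilbert) = - cinner x y"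
  using cinner_add_left[of x "-x" y] by (simp add: add.inverse_unique)

lemma cinner_minus_right: "cinner x (- (y::'a::complex_hilbert)) = - cinner x y"
  using cinner_add_right[of x y "-y"] by (simp add: add.inverse_unique)

lemma cinner_diff_left: "cinner (x - y) (z::'a::complex_hilbert) = cinner x z - cinner y z"
  using cinner_add_left[of x "-y" z] by (simp add: cinner_minus_left)

lemma cinner_diff_right: "cinner x (y - (z::'a::complex_hilbert)) = cinner x y - cinner x z"
  using cinner_add_right[of x y "-z"] by (simp add: cinner_minus_right)

lemma cinner_scaleR_left: "cinner (r *\<^sub>R x) (y::'a::complex_hilbert) = of_real r * cinner x y"
  by (simp add: scaleR_scaleC cinner_scaleC_left)

lemma cinner_scaleR_right: "cinner x (r *\<^sub>R (y::'a::complex_hilbert)) = of_real r * cinner x y"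
  by (simp add: scaleR_scaleC cinner_scaleC_right)

lemma cinner_self: "cinner x (x::'a::complex_hilbert) = complex_of_real ((norm x)\<^sup>2)"
proof -
  have "(norm x)\<^sup>2 = Re (cinner x x)"
    using norm_eq_sqrt_cinner[of x] cinner_self_nonneg[of x] by simp
  then show ?thesis using cinner_self_real[of x] by (simp add: complex_eq_iff)
qed

lemma Re_cinner_self: "Re (cinner x (x::'a::complex_hilbert)) = (norm x)\<^sup>2"
  by (simp add: cinner_self)

lemma cinner_self_eq_0 [simp]: "cinner x x = 0 \<longleftrightarrow> (x::'a::complex_hilbert) = 0"
  by (simp add: cinner_self)

lemma cinner_eq_0_commute: "cinner x y = 0 \<longleftrightarrow> cinner y (x::'a::complex_hilbert) = 0"
  using cinner_commute[of x y] by simp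

lemma Re_cinner_commute: "Re (cinner x (y::'a::complex_hilbert)) = Re (cinner y x)"
  by (metis cinner_commute complex_cnj_cnj cnj.simps(1))

lemma norm_add_square:
  "(norm (x + y))\<^sup>2 = (norm x)\<^sup>2 + (norm (y::'a::complex_hilbert))\<^sup>2 + 2 * Re (cinner x y)"
proof -
  have "(norm (x + y))\<^sup>2 = Re (cinner (x + y) (x + y))" by (simp add: Re_cinner_self)
  also have "\<dots> = Re (cinner x x) + Re (cinner y y) + Re (cinner x y) + Re (cinner y x)"
    by (simp add: cinner_add_left cinner_add_right)
  finally show ?thesis by (simp add: Re_cinner_self Re_cinner_commute[of y x])
qed

lemma norm_diff_square:
  "(norm (x - y))\<^sup>2 = (norm x)\<^sup>2 + (norm (y::'a::complex_hilbert))\<^sup>2 - 2 * Re (cinner x y)"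
  using norm_add_square[of x "-y"] by (simp add: cinner_minus_right)

lemma Re_cinner_le_norm: "Re (cinner x (y::'a::complex_hilbert)) \<le> norm x * norm y"
proof -
  have "(norm (x + y))\<^sup>2 \<le> (norm x + norm y)\<^sup>2"
    by (simp add: power_mono norm_triangle_ineq)
  then show ?thesis by (simp add: norm_add_square power2_sum)
qed

lemma norm_scaleC: "norm (scaleC c (x::'a::complex_hilbert)) = cmod c * norm x"
proof -
  have "cinner (scaleC c x) (scaleC c x) = (cnj c * c) * cinner x x"
    by (simp add: cinner_scaleC_left cinner_scaleC_right mult.assoc)
  also have "cnj c * c = complex_of_real ((cmod c)\<^sup>2)"
    by (metis complex_norm_square mult.commute)
  finally have "cinner (scaleC c x) (scaleC c x) = complex_of_real ((cmod c * norm x)\<^sup>2)"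
    by (simp add: cinner_self power_mult_distrib)
  then have "(norm (scaleC c x))\<^sup>2 = (cmod c * norm x)\<^sup>2"
    by (metis Re_cinner_self Re_complex_of_real)
  then show ?thesis by (simp add: power2_eq_iff_nonneg)
qed

lemma cinner_cauchy_schwarz: "cmod (cinner x (y::'a::complex_hilbert)) \<le> norm x * norm y"
proof (cases "cinner x y = 0")
  case True then show ?thesis by simp
next
  case False
  \<comment> \<open>rotate y by a unimodular phase so that the inner product becomes real and nonnegative\<close>
  define u where "u = cnj (cinner x y) / cmod (cinner x y)"
  have "cmod u = 1" using False by (simp add: u_def norm_divide)
  have "cinner x (scaleC u y) = cnj (cinner x y) * cinner x y / complex_of_real (cmod (cinner x y))"
    by (simp add: u_def cinner_scaleC_right)
  also have "cnj (cinner x y) * cinner x y = complex_of_real ((cmod (cinner x y))\<^sup>2)"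
    by (metis complex_norm_square mult.commute)
  finally have "cmod (cinner x y) = Re (cinner x (scaleC u y))"
    using False by (simp add: power2_eq_square)
  also have "\<dots> \<le> norm x * norm (scaleC u y)" by (rule Re_cinner_le_norm)
  also have "norm (scaleC u y) = norm y" by (simp add: norm_scaleC \<open>cmod u = 1\<close>)
  finally show ?thesis .
qed

lemma tendsto_cinner [tendsto_intros]:
  assumes "(f \<longlongrightarrow> a) F" "(g \<longlongrightarrow> b) F"
  shows "((\<lambda>n. cinner (f n) (g n :: 'a::complex_hilbert)) \<longlongrightarrow> cinner a b) F"
proof -
  have split: "cinner (f n) (g n) - cinner a b = cinner (f n - a) (g n) + cinner a (g n - b)" for n
    by (simp add: cinner_diff_left cinner_diff_right)
  have "((\<lambda>n. norm (f n - a) * norm (g n) + norm a * norm (g n - b))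
          \<longlongrightarrow> 0 * norm b + norm a * 0) F"
    by (intro tendsto_intros tendsto_norm_zero LIM_zero assms)
  then have bound: "((\<lambda>n. norm (f n - a) * norm (g n) + norm a * norm (g n - b)) \<longlongrightarrow> 0) F"
    by simp
  have "((\<lambda>n. cinner (f n - a) (g n) + cinner a (g n - b)) \<longlongrightarrow> 0) F"
  proof (rule tendsto_0_le[OF bound, where K=1])
    show "\<forall>\<^sub>F n in F. norm (cinner (f n - a) (g n) + cinner a (g n - b))
          \<le> norm (norm (f n - a) * norm (g n) + norm a * norm (g n - b)) * 1"
      by (intro always_eventually allI order.trans[OF norm_triangle_ineq])
         (simp add: add_mono cinner_cauchy_schwarz)
  qed
  then have "((\<lambda>n. cinner (f n) (g n) - cinner a b) \<longlongrightarrow> 0) F" by (simp only: split)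
  then show ?thesis by (rule LIM_zero_cancel)
qed

lemma tendsto_scaleC:
  assumes "(f \<longlongrightarrow> a) F"
  shows "((\<lambda>n. scaleC c (f n :: 'a::complex_hilbert)) \<longlongrightarrow> scaleC c a) F"
proof -
  have "((\<lambda>n. cmod c * norm (f n - a)) \<longlongrightarrow> cmod c * 0) F"
    by (intro tendsto_intros tendsto_norm_zero LIM_zero assms)
  then have bound: "((\<lambda>n. cmod c * norm (f n - a)) \<longlongrightarrow> 0) F" by simp
  have "((\<lambda>n. scaleC c (f n) - scaleC c a) \<longlongrightarrow> 0) F"
    by (rule tendsto_0_le[OF bound, where K=1])
       (simp add: norm_scaleC flip: scaleC_diff_right)
  then show ?thesis by (rule LIM_zero_cancel)
qed

section \<open>Closed subspaces, orthogonal complements and projections\<close>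

lemma closed_csubspace_zero: "closed_csubspace K \<Longrightarrow> 0 \<in> K"
  and closed_csubspace_add: "closed_csubspace K \<Longrightarrow> x \<in> K \<Longrightarrow> y \<in> K \<Longrightarrow> x + y \<in> K"
  and closed_csubspace_scaleC: "closed_csubspace K \<Longrightarrow> x \<in> K \<Longrightarrow> scaleC c x \<in> K"
  and closed_csubspace_closed: "closed_csubspace K \<Longrightarrow> closed K"
  by (simp_all add: closed_csubspace_def)

lemma closed_csubspace_scaleR: "closed_csubspace K \<Longrightarrow> x \<in> K \<Longrightarrow> r *\<^sub>R x \<in> K"
  by (simp add: closed_csubspace_scaleC scaleR_scaleC)

lemma closed_csubspace_uminus: "closed_csubspace K \<Longrightarrow> x \<in> K \<Longrightarrow> - x \<in> K"
  using closed_csubspace_scaleR[of K x "-1"] by simp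

lemma closed_csubspace_diff: "closed_csubspace K \<Longrightarrow> x \<in> K \<Longrightarrow> y \<in> K \<Longrightarrow> x - y \<in> K"
  using closed_csubspace_add[of K x "-y"] closed_csubspace_uminus[of K y] by simp

lemma closed_csubspace_sum:
  "closed_csubspace K \<Longrightarrow> (\<And>i. i \<in> I \<Longrightarrow> f i \<in> K) \<Longrightarrow> sum f I \<in> K"
  by (induction I rule: infinite_finite_induct)
     (auto simp: closed_csubspace_zero closed_csubspace_add)

lemma closed_csubspace_closure:
  fixes U :: "'a::complex_hilbert set"
  assumes "0 \<in> U" "\<And>x y. x \<in> U \<Longrightarrow> y \<in> U \<Longrightarrow> x + y \<in> U"
    and "\<And>c x. x \<in> U \<Longrightarrow> scaleC c x \<in> U"
  shows "closed_csubspace (closure U)"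
  unfolding closed_csubspace_def
proof (intro conjI ballI allI)
  show "closed (closure U)" by simp
  show "0 \<in> closure U" using assms(1) closure_subset by blast
next
  fix x y assume "x \<in> closure U" "y \<in> closure U"
  then obtain f g where "\<And>n. f n \<in> U" "f \<longlonglongrightarrow> x" "\<And>n. g n \<in> U" "g \<longlonglongrightarrow> y"
    unfolding closure_sequential by metis
  then show "x + y \<in> closure U"
    unfolding closure_sequential by (intro exI[of _ "\<lambda>n. f n + g n"]) (auto intro: assms tendsto_add)
next
  fix c x assume "x \<in> closure U"
  then obtain f where "\<And>n. f n \<in> U" "f \<longlonglongrightarrow> x"
    unfolding closure_sequential by metis
  then show "scaleC c x \<in> closure U"
    unfolding closure_sequential
    by (intro exI[of _ "\<lambda>n. scaleC c (f n)"]) (auto intro: assms tendsto_scaleC)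
qed

definition orthogonal_complement :: "'a::complex_hilbert set \<Rightarrow> 'a set" where
  "orthogonal_complement K = {x. \<forall>y\<in>K. cinner y x = 0}"

lemma orthogonal_complement_iff: "x \<in> orthogonal_complement K \<longleftrightarrow> (\<forall>y\<in>K. cinner y x = 0)"
  by (simp add: orthogonal_complement_def)

lemma orthogonal_complement_iff': "x \<in> orthogonal_complement K \<longleftrightarrow> (\<forall>y\<in>K. cinner x y = 0)"
  by (simp add: orthogonal_complement_def cinner_eq_0_commute[of x])

lemma orthogonal_complement_antimono:
  "A \<subseteq> B \<Longrightarrow> orthogonal_complement B \<subseteq> orthogonal_complement A"
  by (auto simp: orthogonal_complement_def)

lemma orthogonal_complement_swap:
  "A \<subseteq> orthogonal_complement B \<longleftrightarrow> B \<subseteq> orthogonal_complement A"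
  unfolding orthogonal_complement_iff subset_iff using cinner_eq_0_commute by blast

lemma orthogonal_complement_Int: "x \<in> K \<Longrightarrow> x \<in> orthogonal_complement K \<Longrightarrow> x = 0"
  by (auto simp: orthogonal_complement_def)

lemma closed_csubspace_orthogonal_complement: "closed_csubspace (orthogonal_complement K)"
proof -
  have "isCont (cinner y) x" for x y :: 'a
    unfolding isCont_def by (intro tendsto_cinner tendsto_const tendsto_ident_at)
  then have "closed {x. cinner y x = 0}" for y :: 'a
    by (intro closed_Collect_eq continuous_at_imp_continuous_on) auto
  moreover have "orthogonal_complement K = (\<Inter>y\<in>K. {x. cinner y x = 0})"
    by (auto simp: orthogonal_complement_def)
  ultimately show ?thesis
    unfolding closed_csubspace_def
    by (auto simp: orthogonal_complement_def cinner_add_right cinner_scaleC_right)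
qed

lemma nonpos_if_quadratic_bound:
  fixes R c :: real
  assumes "\<And>t. t > 0 \<Longrightarrow> 2 * t * R \<le> t\<^sup>2 * c" "c \<ge> 0"
  shows "R \<le> 0"
proof (rule ccontr)
  assume "\<not> R \<le> 0"
  define t where "t = R / (c + 1)"
  have "t > 0" using \<open>\<not> R \<le> 0\<close> assms(2) by (simp add: t_def)
  then have "2 * R \<le> t * c" using assms(1)[of t] by (simp add: power2_eq_square mult.assoc)
  also have "t * c < R" using \<open>\<not> R \<le> 0\<close> assms(2) by (simp add: t_def field_simps)
  finally show False using \<open>\<not> R \<le> 0\<close> by simp
qed

lemma minimising_sequence_Cauchy:
  fixes K :: "'a::complex_hilbert set"
  assumes K: "closed_csubspace K" and yK: "\<And>n. y n \<in> K"
    and d_le: "\<And>k. k \<in> K \<Longrightarrow> d \<le> (norm (x - k))\<^sup>2"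
    and yd: "\<And>n. (norm (x - y n))\<^sup>2 < d + 1 / (real n + 1)"
  shows "Cauchy y"
proof -
  have parallelogram: "(norm (y m - y n))\<^sup>2 \<le> 2 / (real n + 1) + 2 / (real m + 1)" for m n
  proof -
    define a where "a = x - y n"
    define b where "b = x - y m"
    have "(norm (a + b))\<^sup>2 + (norm (a - b))\<^sup>2 = 2 * (norm a)\<^sup>2 + 2 * (norm b)\<^sup>2"
      by (simp add: norm_add_square norm_diff_square)
    moreover have "a - b = y m - y n" by (simp add: a_def b_def)
    moreover have "a + b = 2 *\<^sub>R (x - (1/2) *\<^sub>R (y n + y m))"
      by (simp add: a_def b_def algebra_simps scaleR_2)
    moreover have "d \<le> (norm (x - (1/2) *\<^sub>R (y n + y m)))\<^sup>2"
      by (intro d_le closed_csubspace_scaleR closed_csubspace_add K yK)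
    ultimately have "(norm (y m - y n))\<^sup>2 \<le> 2 * (norm a)\<^sup>2 + 2 * (norm b)\<^sup>2 - 4 * d"
      by (simp add: power_mult_distrib)
    then show ?thesis using yd[of n] yd[of m] by (simp add: a_def b_def)
  qed
  show "Cauchy y"
  proof (rule metric_CauchyI)
    fix e :: real assume e: "e > 0"
    obtain N :: nat where N: "4 / e\<^sup>2 < real N" using reals_Archimedean2 by blast
    have "dist (y m) (y n) < e" if "m \<ge> N" "n \<ge> N" for m n
    proof -
      have "2 / (real n + 1) \<le> 2 / (real N + 1)" "2 / (real m + 1) \<le> 2 / (real N + 1)"
        using that by (auto simp: divide_left_mono)
      moreover have "4 / (real N + 1) < e\<^sup>2"
      proof -
        have "4 < e\<^sup>2 * real N" using N e by (simp add: field_simps)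
        also have "\<dots> \<le> e\<^sup>2 * (real N + 1)" by (intro mult_left_mono) simp_all
        finally show ?thesis by (simp add: field_simps)
      qed
      ultimately have "(norm (y m - y n))\<^sup>2 < e\<^sup>2" using parallelogram[of m n] by linarith
      then show ?thesis using e by (simp add: dist_norm power_less_imp_less_base less_imp_le)
    qed
    then show "\<exists>M. \<forall>m\<ge>M. \<forall>n\<ge>M. dist (y m) (y n) < e" by blast
  qed
qed

lemma nearest_point_exists:
  fixes K :: "'a::complex_hilbert set"
  assumes K: "closed_csubspace K"
  obtains p where "p \<in> K" "\<And>k. k \<in> K \<Longrightarrow> norm (x - p) \<le> norm (x - k)"
proof -
  define D where "D = (\<lambda>k. (norm (x - k))\<^sup>2) ` K"
  define d where "d = Inf D"
  have "D \<noteq> {}" using closed_csubspace_zero[OF K] by (auto simp: D_def)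
  have d_le: "d \<le> (norm (x - k))\<^sup>2" if "k \<in> K" for k
    unfolding d_def by (rule cInf_lower) (use that in \<open>auto simp: D_def intro!: bdd_belowI[of _ 0]\<close>)
  have "\<exists>y\<in>K. (norm (x - y))\<^sup>2 < d + 1 / (real n + 1)" for n
  proof -
    have "Inf D < d + 1 / (real n + 1)" by (simp add: d_def)
    then obtain z where "z \<in> D" "z < d + 1 / (real n + 1)" using cInf_lessD[OF \<open>D \<noteq> {}\<close>] by blast
    then show ?thesis by (auto simp: D_def)
  qed
  then obtain y where yK: "\<And>n. y n \<in> K" and yd: "\<And>n. (norm (x - y n))\<^sup>2 < d + 1 / (real n + 1)"
    by metis
  have "Cauchy y" by (rule minimising_sequence_Cauchy[OF K yK d_le yd])
  then obtain p where yp: "y \<longlonglongrightarrow> p" using Cauchy_convergent_iff convergent_def by blast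
  have pK: "p \<in> K" using closed_sequentially[OF closed_csubspace_closed[OF K] yK yp] .
  have "(\<lambda>n. 1 / (real n + 1)) \<longlonglongrightarrow> 0"
    using LIMSEQ_inverse_real_of_nat by (simp add: inverse_eq_divide add.commute)
  then have upper: "(\<lambda>n. d + 1 / (real n + 1)) \<longlonglongrightarrow> d"
    using tendsto_add[OF tendsto_const, of _ 0 sequentially d] by simp
  have lower: "(\<lambda>n. (norm (x - y n))\<^sup>2) \<longlonglongrightarrow> (norm (x - p))\<^sup>2"
    by (intro tendsto_intros yp)
  have below: "\<forall>\<^sub>F n in sequentially. (norm (x - y n))\<^sup>2 \<le> d + 1 / (real n + 1)"
    using yd by (simp add: less_imp_le)
  have p_le: "(norm (x - p))\<^sup>2 \<le> d"
    by (rule tendsto_le[OF _ upper lower below]) simp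
  have "norm (x - p) \<le> norm (x - k)" if "k \<in> K" for k
  proof (rule power2_le_imp_le)
    show "(norm (x - p))\<^sup>2 \<le> (norm (x - k))\<^sup>2" using d_le[OF that] p_le by linarith
  qed simp
  with pK show ?thesis using that by blast
qed

lemma projection_exists:
  fixes K :: "'a::complex_hilbert set"
  assumes K: "closed_csubspace K"
  shows "\<exists>p\<in>K. x - p \<in> orthogonal_complement K"
proof -
  obtain p where pK: "p \<in> K" and nearest: "\<And>k. k \<in> K \<Longrightarrow> norm (x - p) \<le> norm (x - k)"
    using nearest_point_exists[OF K] by blast
  have Re0: "Re (cinner (x - p) k) = 0" if kK: "k \<in> K" for k
  proof -
    have first_variation: "2 * t * Re (cinner (x - p) k) \<le> t\<^sup>2 * (norm k)\<^sup>2" if "k \<in> K" for t k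
    proof -
      have "(norm (x - p))\<^sup>2 \<le> (norm (x - (p + t *\<^sub>R k)))\<^sup>2"
        by (intro power_mono nearest closed_csubspace_add K pK closed_csubspace_scaleR that) simp
      also have "\<dots> = (norm (x - p))\<^sup>2 + t\<^sup>2 * (norm k)\<^sup>2 - 2 * t * Re (cinner (x - p) k)"
        by (simp add: diff_diff_eq[symmetric] norm_diff_square cinner_scaleR_right power_mult_distrib)
      finally show ?thesis by simp
    qed
    have "Re (cinner (x - p) k) \<le> 0"
      by (rule nonpos_if_quadratic_bound[OF first_variation[OF kK]]) simp
    moreover have "Re (cinner (x - p) (-k)) \<le> 0"
      by (rule nonpos_if_quadratic_bound[OF first_variation[OF closed_csubspace_uminus[OF K kK]]])
         simp
    ultimately show ?thesis by (simp add: cinner_minus_right)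
  qed
  have "cinner (x - p) k = 0" if kK: "k \<in> K" for k
  proof -
    have "Re (cinner (x - p) (scaleC \<i> k)) = 0" by (rule Re0[OF closed_csubspace_scaleC[OF K kK]])
    then show ?thesis using Re0[OF kK] by (simp add: cinner_scaleC_right complex_eq_iff)
  qed
  then show ?thesis using pK by (auto simp: orthogonal_complement_iff')
qed

definition projection :: "'a::complex_hilbert set \<Rightarrow> 'a \<Rightarrow> 'a" where
  "projection K x = (THE p. p \<in> K \<and> x - p \<in> orthogonal_complement K)"

lemma projection_unique:
  assumes K: "closed_csubspace K"
    and "p \<in> K" "x - p \<in> orthogonal_complement K" "q \<in> K" "x - q \<in> orthogonal_complement K"
  shows "p = q"
proof -
  have "p - q \<in> K" using assms by (simp add: closed_csubspace_diff)
  moreover have "p - q \<in> orthogonal_complement K"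
    using closed_csubspace_diff[OF closed_csubspace_orthogonal_complement assms(5) assms(3)]
    by (simp add: algebra_simps)
  ultimately show ?thesis using orthogonal_complement_Int by fastforce
qed

lemma projection_in:
  assumes K: "closed_csubspace K"
  shows "projection K x \<in> K" and "x - projection K x \<in> orthogonal_complement K"
proof -
  have "\<exists>!p. p \<in> K \<and> x - p \<in> orthogonal_complement K"
    using projection_exists[OF K, of x] projection_unique[OF K] by blast
  then have "projection K x \<in> K \<and> x - projection K x \<in> orthogonal_complement K"
    unfolding projection_def by (rule theI')
  then show "projection K x \<in> K" "x - projection K x \<in> orthogonal_complement K" by auto
qed

lemma projection_eqI:
  assumes K: "closed_csubspace K" and "p \<in> K" "x - p \<in> orthogonal_complement K"
  shows "projection K x = p"
  using projection_unique[OF K projection_in[OF K, of x] assms(2,3)] .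

lemma mem_if_orthogonal_to_complement:
  assumes K: "closed_csubspace K"
    and x: "\<And>y. y \<in> orthogonal_complement K \<Longrightarrow> cinner y x = 0"
  shows "x \<in> K"
proof -
  have "x - projection K x \<in> orthogonal_complement K" by (rule projection_in(2)[OF K])
  moreover have "cinner (x - projection K x) (projection K x) = 0"
    using projection_in[OF K, of x] by (simp add: orthogonal_complement_iff')
  ultimately have "cinner (x - projection K x) (x - projection K x) = 0"
    using x by (simp add: cinner_diff_right)
  then show ?thesis using projection_in(1)[OF K, of x] by simp
qed

lemma projection_add:
  assumes K: "closed_csubspace K"
  shows "projection K (x + y) = projection K x + projection K y"
proof (rule projection_eqI[OF K])
  show "projection K x + projection K y \<in> K"
    by (rule closed_csubspace_add[OF K projection_in(1)[OF K] projection_in(1)[OF K]])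
  have "(x + y) - (projection K x + projection K y)
      = (x - projection K x) + (y - projection K y)" by simp
  also have "\<dots> \<in> orthogonal_complement K"
    by (rule closed_csubspace_add[OF closed_csubspace_orthogonal_complement
          projection_in(2)[OF K] projection_in(2)[OF K]])
  finally show "(x + y) - (projection K x + projection K y) \<in> orthogonal_complement K" .
qed

lemma projection_scaleC:
  assumes K: "closed_csubspace K"
  shows "projection K (scaleC c x) = scaleC c (projection K x)"
proof (rule projection_eqI[OF K])
  show "scaleC c (projection K x) \<in> K" by (rule closed_csubspace_scaleC[OF K projection_in(1)[OF K]])
  show "scaleC c x - scaleC c (projection K x) \<in> orthogonal_complement K"
    using closed_csubspace_scaleC[OF closed_csubspace_orthogonal_complement projection_in(2)[OF K]]
    by (simp add: scaleC_diff_right)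
qed

lemma norm_projection_le:
  assumes K: "closed_csubspace K"
  shows "norm (projection K x) \<le> norm x"
proof (rule power2_le_imp_le)
  have "cinner (projection K x) (x - projection K x) = 0"
    using projection_in[OF K, of x] by (auto simp: orthogonal_complement_iff)
  then show "(norm (projection K x))\<^sup>2 \<le> (norm x)\<^sup>2"
    using norm_add_square[of "projection K x" "x - projection K x"] by simp
qed simp

abbreviation bounded_clinear :: "('a::complex_hilbert \<Rightarrow> 'a) \<Rightarrow> bool" where
  "bounded_clinear T \<equiv> bounded_clinear_on UNIV T"

abbreviation selfadjoint :: "('a::complex_hilbert \<Rightarrow> 'a) \<Rightarrow> bool" where
  "selfadjoint T \<equiv> self_adjoint_on UNIV T"

definition positive_op :: "('a::complex_hilbert \<Rightarrow> 'a) \<Rightarrow> bool" where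
  "positive_op T \<longleftrightarrow> (\<forall>x. 0 \<le> Re (cinner (T x) x))"

lemma bounded_clinearI:
  assumes "\<And>x y. T (x + y) = T x + T y" "\<And>c x. T (scaleC c x) = scaleC c (T x)"
    and "\<And>x. norm (T x) \<le> C * norm x"
  shows "bounded_clinear T"
  using assms unfolding bounded_clinear_on_def by blast

lemma bounded_clinear_add: "bounded_clinear T \<Longrightarrow> T (x + y) = T x + T y"
  and bounded_clinear_scaleC: "bounded_clinear T \<Longrightarrow> T (scaleC c x) = scaleC c (T x)"
  by (simp_all add: bounded_clinear_on_def)

lemma bounded_clinear_scaleR: "bounded_clinear T \<Longrightarrow> T (r *\<^sub>R x) = r *\<^sub>R (T x)"
  by (simp add: bounded_clinear_scaleC scaleR_scaleC)

lemma bounded_clinear_zero: "bounded_clinear T \<Longrightarrow> T 0 = 0"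
  using bounded_clinear_scaleR[of T 0 0] by simp

lemma bounded_clinear_diff: "bounded_clinear T \<Longrightarrow> T (x - y) = T x - T y"
  using bounded_clinear_add[of T x "-y"] bounded_clinear_scaleR[of T "-1" y] by simp

lemma bounded_clinear_bound:
  assumes "bounded_clinear T"
  obtains C where "C > 0" "\<And>x. norm (T x) \<le> C * norm x"
proof -
  obtain C where C: "\<And>x. norm (T x) \<le> C * norm x"
    using assms by (auto simp: bounded_clinear_on_def)
  have "norm (T x) \<le> (\<bar>C\<bar> + 1) * norm x" for x
    using C[of x] by (smt (verit, best) mult_right_mono norm_ge_zero)
  then show ?thesis using that[of "\<bar>C\<bar> + 1"] by simp
qed

lemma bounded_clinear_tendsto:
  assumes T: "bounded_clinear T" and f: "(f \<longlongrightarrow> a) F"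
  shows "((\<lambda>n. T (f n)) \<longlongrightarrow> T a) F"
proof -
  obtain C where C: "C > 0" "\<And>x. norm (T x) \<le> C * norm x"
    using bounded_clinear_bound[OF T] by blast
  have "((\<lambda>n. C * norm (f n - a)) \<longlongrightarrow> C * 0) F"
    by (intro tendsto_intros tendsto_norm_zero LIM_zero f)
  then have bound: "((\<lambda>n. C * norm (f n - a)) \<longlongrightarrow> 0) F" by simp
  have "((\<lambda>n. T (f n) - T a) \<longlongrightarrow> 0) F"
    by (rule tendsto_0_le[OF bound, where K=1])
       (use C in \<open>simp add: bounded_clinear_diff[OF T, symmetric]\<close>)
  then show ?thesis by (rule LIM_zero_cancel)
qed

lemma bounded_clinear_continuous_on:
  assumes "bounded_clinear T"
  shows "continuous_on S T"
proof -
  have "isCont T x" for x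
    unfolding isCont_def by (rule bounded_clinear_tendsto[OF assms]) (auto intro: tendsto_ident_at)
  then show ?thesis by (simp add: continuous_at_imp_continuous_on)
qed

lemma closed_csubspace_vimage:
  assumes T: "bounded_clinear T" and W: "closed_csubspace W"
  shows "closed_csubspace {x. T x \<in> W}"
  unfolding closed_csubspace_def
proof (intro conjI ballI allI)
  show "closed {x. T x \<in> W}"
    using closed_vimage[OF closed_csubspace_closed[OF W], of T]
      bounded_clinear_continuous_on[OF T, of UNIV]
    by (simp add: vimage_def continuous_on_closed_vimage)
qed (use W closed_csubspace_zero closed_csubspace_add closed_csubspace_scaleC in
     \<open>simp_all add: bounded_clinear_zero[OF T] bounded_clinear_add[OF T] bounded_clinear_scaleC[OF T]\<close>)

lemma closed_csubspace_kernel: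
  assumes "bounded_clinear T"
  shows "closed_csubspace {x. T x = 0}"
  using closed_csubspace_vimage[OF assms, of "{0}"] by (simp add: closed_csubspace_def)

lemma bounded_clinear_compose:
  assumes T: "bounded_clinear T" and U: "bounded_clinear U"
  shows "bounded_clinear (\<lambda>x. T (U x))"
proof -
  obtain C where C: "C > 0" "\<And>x. norm (T x) \<le> C * norm x" using bounded_clinear_bound[OF T] by blast
  obtain D where D: "\<And>x. norm (U x) \<le> D * norm x" using bounded_clinear_bound[OF U] by blast
  have "norm (T (U x)) \<le> (C * D) * norm x" for x
    using C(2)[of "U x"] D[of x] C(1) by (smt (verit) mult.assoc mult_left_mono)
  then show ?thesis
    by (intro bounded_clinearI)
       (simp_all add: bounded_clinear_add[OF T] bounded_clinear_add[OF U]
         bounded_clinear_scaleC[OF T] bounded_clinear_scaleC[OF U])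
qed

lemma bounded_clinear_plus:
  assumes T: "bounded_clinear T" and U: "bounded_clinear U"
  shows "bounded_clinear (\<lambda>x. T x + U x)"
proof -
  obtain C where C: "C > 0" "\<And>x. norm (T x) \<le> C * norm x" using bounded_clinear_bound[OF T] by blast
  obtain D where D: "D > 0" "\<And>x. norm (U x) \<le> D * norm x" using bounded_clinear_bound[OF U] by blast
  have "norm (T x + U x) \<le> (C + D) * norm x" for x
    using C(2)[of x] D(2)[of x] norm_triangle_ineq[of "T x" "U x"] by (simp add: distrib_right)
  then show ?thesis
    by (intro bounded_clinearI)
       (simp_all add: bounded_clinear_add[OF T] bounded_clinear_add[OF U]
         bounded_clinear_scaleC[OF T] bounded_clinear_scaleC[OF U] scaleC_add_right)
qed

lemma bounded_clinear_scaleR_op: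
  assumes T: "bounded_clinear T"
  shows "bounded_clinear (\<lambda>x. r *\<^sub>R T x)"
proof -
  obtain C where C: "C > 0" "\<And>x. norm (T x) \<le> C * norm x" using bounded_clinear_bound[OF T] by blast
  have "norm (r *\<^sub>R T x) \<le> (\<bar>r\<bar> * C) * norm x" for x
    using C(2)[of x] by (simp add: mult.assoc mult_left_mono)
  moreover have "r *\<^sub>R T (scaleC c x) = scaleC c (r *\<^sub>R T x)" for c x
    by (simp add: bounded_clinear_scaleC[OF T] scaleR_scaleC scaleC_scaleC mult.commute)
  moreover have "r *\<^sub>R T (x + y) = r *\<^sub>R T x + r *\<^sub>R T y" for x y
    by (simp add: bounded_clinear_add[OF T] scaleR_add_right)
  ultimately show ?thesis by (intro bounded_clinearI)
qed

lemma bounded_clinear_ident: "bounded_clinear (\<lambda>x. x)"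
  by (rule bounded_clinearI[where C=1]) simp_all

lemma bounded_clinear_minus_op:
  "bounded_clinear T \<Longrightarrow> bounded_clinear U \<Longrightarrow> bounded_clinear (\<lambda>x. T x - U x)"
  using bounded_clinear_plus[of T "\<lambda>x. (-1) *\<^sub>R U x"] bounded_clinear_scaleR_op[of U "-1"] by simp

lemma bounded_clinear_funpow: "bounded_clinear T \<Longrightarrow> bounded_clinear (T ^^ k)"
proof (induction k)
  case 0 then show ?case using bounded_clinear_ident by (simp add: id_def)
next
  case (Suc k)
  then show ?case using bounded_clinear_compose[of T "T ^^ k"] by (simp add: comp_def)
qed

lemma bounded_clinear_projection: "closed_csubspace K \<Longrightarrow> bounded_clinear (projection K)"
  by (rule bounded_clinearI[where C=1]) (simp_all add: projection_add projection_scaleC norm_projection_le)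

lemma selfadjoint_iff: "selfadjoint T \<longleftrightarrow> (\<forall>x y. cinner (T x) y = cinner x (T y))"
  by (simp add: self_adjoint_on_def)

lemma selfadjointD: "selfadjoint T \<Longrightarrow> cinner (T x) y = cinner x (T y)"
  by (simp add: self_adjoint_on_def)

lemma Re_cinner_selfadjoint: "selfadjoint T \<Longrightarrow> Re (cinner (T x) y) = Re (cinner (T y) x)"
  by (metis Re_cinner_commute selfadjointD)

lemma cinner_selfadjoint_square:
  "selfadjoint T \<Longrightarrow> Re (cinner (T (T x)) x) = (norm (T x))\<^sup>2"
  using selfadjointD[of T "T x" x] by (simp add: Re_cinner_self)

lemma selfadjoint_compose_commuting:
  "selfadjoint T \<Longrightarrow> selfadjoint U \<Longrightarrow> (\<And>x. T (U x) = U (T x)) \<Longrightarrow> selfadjoint (\<lambda>x. T (U x))"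
  unfolding selfadjoint_iff by metis

lemma selfadjoint_plus: "selfadjoint T \<Longrightarrow> selfadjoint U \<Longrightarrow> selfadjoint (\<lambda>x. T x + U x)"
  and selfadjoint_minus: "selfadjoint T \<Longrightarrow> selfadjoint U \<Longrightarrow> selfadjoint (\<lambda>x. T x - U x)"
  and selfadjoint_scaleR: "selfadjoint T \<Longrightarrow> selfadjoint (\<lambda>x. r *\<^sub>R T x)"
  and selfadjoint_ident: "selfadjoint (\<lambda>x. x)"
  by (simp_all add: selfadjoint_iff cinner_add_left cinner_add_right cinner_diff_left
      cinner_diff_right cinner_scaleR_left cinner_scaleR_right)

lemma funpow_commute: "(\<And>x. X (T x) = T (X x)) \<Longrightarrow> X ((T ^^ k) x) = (T ^^ k) (X x)"
  by (induction k arbitrary: x) auto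

lemma selfadjoint_funpow: "selfadjoint T \<Longrightarrow> selfadjoint (T ^^ k)"
proof (induction k)
  case 0 then show ?case by (simp add: selfadjoint_iff)
next
  case (Suc k)
  have "selfadjoint (\<lambda>x. T ((T ^^ k) x))"
    by (rule selfadjoint_compose_commuting[OF Suc.prems Suc.IH[OF Suc.prems]])
       (simp add: funpow_commute)
  then show ?case by (simp add: comp_def)
qed

lemma positive_op_funpow:
  assumes "selfadjoint T" "positive_op T"
  shows "positive_op (T ^^ k)"
proof -
  \<comment> \<open>write \<open>T\<^sup>k\<close> as \<open>T\<^sup>m T\<^sup>m\<close> or \<open>T\<^sup>m T T\<^sup>m\<close> and move one \<open>T\<^sup>m\<close> across the inner product\<close>
  obtain m where "k = 2 * m \<or> k = 2 * m + 1" by (metis oddE evenE)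
  then show ?thesis
  proof
    assume "k = 2 * m"
    then have "cinner ((T ^^ k) x) x = cinner ((T ^^ m) x) ((T ^^ m) x)" for x
      using selfadjointD[OF selfadjoint_funpow[OF assms(1)], of m] by (simp add: funpow_add mult_2)
    then show ?thesis by (simp add: positive_op_def Re_cinner_self)
  next
    assume "k = 2 * m + 1"
    then have "cinner ((T ^^ k) x) x = cinner (T ((T ^^ m) x)) ((T ^^ m) x)" for x
      using selfadjointD[OF selfadjoint_funpow[OF assms(1)], of m]
      by (simp add: funpow_add mult_2 funpow_swap1)
    then show ?thesis using assms(2) by (simp add: positive_op_def)
  qed
qed

lemma quadratic_nonneg_discriminant:
  fixes a b c :: real
  assumes "\<And>t. 0 \<le> a + 2 * b * t + c * t\<^sup>2" "c \<ge> 0"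
  shows "b\<^sup>2 \<le> a * c"
proof (cases "c = 0")
  case True
  have "b = 0"
  proof (rule ccontr)
    assume "b \<noteq> 0"
    have "0 \<le> a + 2 * b * (- (\<bar>a\<bar> + 1) / (2 * b)) + c * (- (\<bar>a\<bar> + 1) / (2 * b))\<^sup>2"
      by (rule assms(1))
    also have "\<dots> = a - (\<bar>a\<bar> + 1)" using True \<open>b \<noteq> 0\<close> by (simp add: field_simps)
    finally show False by simp
  qed
  then show ?thesis using True by simp
next
  case False
  then have c: "c > 0" using assms(2) by simp
  have "0 \<le> a + 2 * b * (- b / c) + c * (- b / c)\<^sup>2" by (rule assms(1))
  also have "\<dots> = a - b\<^sup>2 / c" using c by (simp add: field_simps power2_eq_square)
  finally show ?thesis using c by (simp add: field_simps)
qed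

text \<open>Cauchy--Schwarz for the semi-inner product \<open>Re \<langle>T u, v\<rangle>\<close> of a positive operator,
  applied to \<open>u = x\<close>, \<open>v = T x\<close>.\<close>

lemma norm_square_le_positive_op:
  assumes T: "bounded_clinear T" "selfadjoint T" "positive_op T"
    and w: "w \<ge> 0" "\<And>x. norm (T x) \<le> w * norm x"
  shows "(norm (T x))\<^sup>2 \<le> w * Re (cinner (T x) x)"
proof -
  define q where "q u v = Re (cinner (T u) v)" for u v
  have q_nonneg: "q u u \<ge> 0" for u using T(3) by (simp add: q_def positive_op_def)
  have q_sym: "q u v = q v u" for u v using Re_cinner_selfadjoint[OF T(2)] by (simp add: q_def)
  have cauchy_schwarz: "(q u v)\<^sup>2 \<le> q u u * q v v" for u v
  proof (rule quadratic_nonneg_discriminant[OF _ q_nonneg])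
    fix t :: real
    have "q (u + t *\<^sub>R v) (u + t *\<^sub>R v) = q u u + 2 * q u v * t + q v v * t\<^sup>2"
      using q_sym[of v u]
      by (simp add: q_def bounded_clinear_add[OF T(1)] bounded_clinear_scaleR[OF T(1)]
          cinner_add_left cinner_add_right cinner_scaleR_left cinner_scaleR_right
          algebra_simps power2_eq_square)
    then show "0 \<le> q u u + 2 * q u v * t + q v v * t\<^sup>2" using q_nonneg by metis
  qed
  have "q (T x) (T x) \<le> norm (T (T x)) * norm (T x)" unfolding q_def by (rule Re_cinner_le_norm)
  also have "\<dots> \<le> w * norm (T x) * norm (T x)" using w(2)[of "T x"] by (simp add: mult_right_mono)
  finally have q_Tx: "q (T x) (T x) \<le> w * (norm (T x))\<^sup>2" by (simp add: power2_eq_square mult.assoc)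
  have "(norm (T x))\<^sup>2 * (norm (T x))\<^sup>2 = (q x (T x))\<^sup>2"
    using q_sym by (simp add: q_def Re_cinner_self power2_eq_square)
  also have "\<dots> \<le> q x x * q (T x) (T x)" by (rule cauchy_schwarz)
  also have "\<dots> \<le> (q x x * w) * (norm (T x))\<^sup>2"
    using mult_left_mono[OF q_Tx q_nonneg] by (simp add: mult.assoc)
  finally have fourth_power: "(norm (T x))\<^sup>2 * (norm (T x))\<^sup>2 \<le> (q x x * w) * (norm (T x))\<^sup>2" .
  then have "(norm (T x))\<^sup>2 \<le> q x x * w"
  proof (cases "T x = 0")
    case True then show ?thesis using q_nonneg[of x] w(1) by simp
  next
    case False
    then have "(norm (T x))\<^sup>2 > 0" by simp
    with fourth_power show ?thesis by (rule mult_right_le_imp_le)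
  qed
  then show ?thesis by (simp add: q_def mult.commute)
qed

section \<open>Square roots of positive contractions\<close>

inductive_set nonneg_poly :: "('a::complex_hilbert \<Rightarrow> 'a) \<Rightarrow> ('a \<Rightarrow> 'a) set" for S where
  zero: "(\<lambda>x. 0) \<in> nonneg_poly S"
| add_monomial: "D \<in> nonneg_poly S \<Longrightarrow> r \<ge> 0 \<Longrightarrow> (\<lambda>x. D x + r *\<^sub>R (S ^^ k) x) \<in> nonneg_poly S"

lemma nonneg_poly_cong: "D \<in> nonneg_poly S \<Longrightarrow> (\<And>x. D' x = D x) \<Longrightarrow> D' \<in> nonneg_poly S"
  by (metis ext)

lemma bounded_clinear_nonneg_poly: "D \<in> nonneg_poly S \<Longrightarrow> bounded_clinear S \<Longrightarrow> bounded_clinear D"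
proof (induction rule: nonneg_poly.induct)
  case zero
  show ?case by (rule bounded_clinearI[where C=0]) simp_all
next
  case (add_monomial D r k)
  then show ?case by (intro bounded_clinear_plus bounded_clinear_scaleR_op bounded_clinear_funpow)
qed

lemma selfadjoint_nonneg_poly: "D \<in> nonneg_poly S \<Longrightarrow> selfadjoint S \<Longrightarrow> selfadjoint D"
proof (induction rule: nonneg_poly.induct)
  case zero
  show ?case by (simp add: selfadjoint_iff)
next
  case (add_monomial D r k)
  then show ?case by (intro selfadjoint_plus selfadjoint_scaleR selfadjoint_funpow)
qed

lemma positive_op_nonneg_poly:
  "D \<in> nonneg_poly S \<Longrightarrow> selfadjoint S \<Longrightarrow> positive_op S \<Longrightarrow> positive_op D"
proof (induction rule: nonneg_poly.induct)
  case zero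
  show ?case by (simp add: positive_op_def)
next
  case (add_monomial D r k)
  have "0 \<le> r * Re (cinner ((S ^^ k) x) x)" for x
    using add_monomial.hyps(2) positive_op_funpow[OF add_monomial.prems]
    by (simp add: positive_op_def)
  moreover have "0 \<le> Re (cinner (D x) x)" for x
    using add_monomial.IH[OF add_monomial.prems] by (simp add: positive_op_def)
  ultimately show ?case by (simp add: positive_op_def cinner_add_left cinner_scaleR_left)
qed

lemma nonneg_poly_commute:
  assumes "D \<in> nonneg_poly S" "bounded_clinear X" "\<And>x. X (S x) = S (X x)"
  shows "X (D x) = D (X x)"
  using assms(1)
proof (induction arbitrary: x rule: nonneg_poly.induct)
  case zero
  show ?case by (simp add: bounded_clinear_zero[OF assms(2)])
next
  case (add_monomial D r k)
  then show ?case using funpow_commute[of X S, OF assms(3)]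
    by (simp add: bounded_clinear_add[OF assms(2)] bounded_clinear_scaleR[OF assms(2)])
qed

lemma nonneg_poly_add:
  assumes "D1 \<in> nonneg_poly S"
  shows "D2 \<in> nonneg_poly S \<Longrightarrow> (\<lambda>x. D1 x + D2 x) \<in> nonneg_poly S"
proof (induction D2 rule: nonneg_poly.induct)
  case zero
  then show ?case using assms by simp
next
  case (add_monomial D r k)
  have "(\<lambda>x. (D1 x + D x) + r *\<^sub>R (S ^^ k) x) \<in> nonneg_poly S"
    by (rule nonneg_poly.add_monomial[OF add_monomial.IH add_monomial.hyps(2)])
  then show ?case by (rule nonneg_poly_cong) (simp add: add.assoc)
qed

lemma nonneg_poly_scaleR:
  "D \<in> nonneg_poly S \<Longrightarrow> r \<ge> 0 \<Longrightarrow> (\<lambda>x. r *\<^sub>R D x) \<in> nonneg_poly S"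
proof (induction D rule: nonneg_poly.induct)
  case zero
  show ?case by (simp add: nonneg_poly.zero)
next
  case (add_monomial D s k)
  have "(\<lambda>x. r *\<^sub>R D x + (r * s) *\<^sub>R (S ^^ k) x) \<in> nonneg_poly S"
    using add_monomial by (intro nonneg_poly.add_monomial) simp_all
  then show ?case by (rule nonneg_poly_cong) (simp add: scaleR_add_right)
qed

lemma nonneg_poly_self: "S \<in> nonneg_poly S"
proof -
  have "(\<lambda>x. (\<lambda>x. 0) x + 1 *\<^sub>R (S ^^ 1) x) \<in> nonneg_poly S"
    by (rule nonneg_poly.add_monomial[OF nonneg_poly.zero]) simp
  then show ?thesis by (rule nonneg_poly_cong) simp
qed

lemma nonneg_poly_compose_funpow:
  "D \<in> nonneg_poly S \<Longrightarrow> (\<lambda>x. D ((S ^^ j) x)) \<in> nonneg_poly S"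
proof (induction D rule: nonneg_poly.induct)
  case zero
  show ?case by (simp add: nonneg_poly.zero)
next
  case (add_monomial D r k)
  have "(\<lambda>x. D ((S ^^ j) x) + r *\<^sub>R (S ^^ (k + j)) x) \<in> nonneg_poly S"
    by (rule nonneg_poly.add_monomial[OF add_monomial.IH add_monomial.hyps(2)])
  then show ?case by (rule nonneg_poly_cong) (simp add: funpow_add)
qed

lemma nonneg_poly_compose:
  assumes S: "bounded_clinear S" and D1: "D1 \<in> nonneg_poly S"
  shows "D2 \<in> nonneg_poly S \<Longrightarrow> (\<lambda>x. D1 (D2 x)) \<in> nonneg_poly S"
proof (induction D2 rule: nonneg_poly.induct)
  case zero
  then show ?case
    using bounded_clinear_zero[OF bounded_clinear_nonneg_poly[OF D1 S]] by (simp add: nonneg_poly.zero)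
next
  case (add_monomial D r k)
  have B: "bounded_clinear D1" using bounded_clinear_nonneg_poly[OF D1 S] .
  have "(\<lambda>x. D1 (D x) + r *\<^sub>R D1 ((S ^^ k) x)) \<in> nonneg_poly S"
    using add_monomial
    by (intro nonneg_poly_add nonneg_poly_scaleR nonneg_poly_compose_funpow D1) simp_all
  then show ?case
    by (rule nonneg_poly_cong) (simp add: bounded_clinear_add[OF B] bounded_clinear_scaleR[OF B])
qed

text \<open>The classical iteration \<open>Y\<^sub>0 = 0\<close>, \<open>Y\<^sub>n\<^sub>+\<^sub>1 = (S + Y\<^sub>n\<^sup>2) / 2\<close> increases to
  \<open>1 - \<surd>(1 - S)\<close>. Every \<open>Y\<^sub>n\<close> and every increment \<open>Y\<^sub>n\<^sub>+\<^sub>1 - Y\<^sub>n\<close> is a polynomial in \<open>S\<close>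
  with nonnegative coefficients, which gives positivity and monotonicity.\<close>

primrec sqrt_iter :: "('a::complex_hilbert \<Rightarrow> 'a) \<Rightarrow> nat \<Rightarrow> 'a \<Rightarrow> 'a" where
  "sqrt_iter S 0 = (\<lambda>x. 0)"
| "sqrt_iter S (Suc n) = (\<lambda>x. (1/2) *\<^sub>R (S x + sqrt_iter S n (sqrt_iter S n x)))"

lemma sqrt_iter_nonneg_poly:
  assumes S: "bounded_clinear S"
  shows "sqrt_iter S n \<in> nonneg_poly S"
proof (induction n)
  case 0 then show ?case using nonneg_poly.zero by simp
next
  case (Suc n)
  have "(\<lambda>x. (1/2) *\<^sub>R (S x + sqrt_iter S n (sqrt_iter S n x))) \<in> nonneg_poly S"
    by (intro nonneg_poly_scaleR nonneg_poly_add nonneg_poly_self nonneg_poly_compose[OF S Suc] Suc)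
       simp
  then show ?case by simp
qed

lemma norm_sqrt_iter_le:
  assumes S: "\<And>x. norm (S x) \<le> norm x"
  shows "norm (sqrt_iter S n x) \<le> norm x"
proof (induction n arbitrary: x)
  case 0 then show ?case by simp
next
  case (Suc n)
  have "norm (S x + sqrt_iter S n (sqrt_iter S n x)) \<le> norm x + norm x"
    using norm_triangle_ineq[of "S x" "sqrt_iter S n (sqrt_iter S n x)"] S[of x]
      Suc[of "sqrt_iter S n x"] Suc[of x] by linarith
  then show ?case by simp
qed

lemma sqrt_iter_increment_nonneg_poly:
  assumes S: "bounded_clinear S"
  shows "(\<lambda>x. sqrt_iter S (Suc n) x - sqrt_iter S n x) \<in> nonneg_poly S"
proof (induction n)
  case 0
  have "(\<lambda>x. (1/2) *\<^sub>R S x) \<in> nonneg_poly S" by (intro nonneg_poly_scaleR nonneg_poly_self) simp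
  then show ?case by (rule nonneg_poly_cong) simp
next
  case (Suc n)
  \<comment> \<open>\<open>Y\<^sub>n\<^sub>+\<^sub>2 - Y\<^sub>n\<^sub>+\<^sub>1 = (Y\<^sub>n\<^sub>+\<^sub>1 - Y\<^sub>n)(Y\<^sub>n\<^sub>+\<^sub>1 + Y\<^sub>n) / 2\<close>, since the \<open>Y\<^sub>n\<close> commute\<close>
  define Y1 where "Y1 = sqrt_iter S (Suc n)"
  define Y0 where "Y0 = sqrt_iter S n"
  have Y1: "Y1 \<in> nonneg_poly S" and Y0: "Y0 \<in> nonneg_poly S"
    unfolding Y1_def Y0_def by (rule sqrt_iter_nonneg_poly[OF S])+
  have B1: "bounded_clinear Y1" and B0: "bounded_clinear Y0"
    by (rule bounded_clinear_nonneg_poly[OF Y1 S], rule bounded_clinear_nonneg_poly[OF Y0 S])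
  have Y1_S: "Y1 (S x) = S (Y1 x)" for x
    by (rule nonneg_poly_commute[OF Y1 S, symmetric]) simp
  have Y1_Y0: "Y1 (Y0 x) = Y0 (Y1 x)" for x
    by (rule nonneg_poly_commute[OF Y0 B1 Y1_S])
  have increment: "(\<lambda>x. Y1 x - Y0 x) \<in> nonneg_poly S" using Suc by (simp add: Y1_def Y0_def)
  have "(\<lambda>x. (1/2) *\<^sub>R ((\<lambda>x. Y1 x - Y0 x) ((\<lambda>x. Y1 x + Y0 x) x))) \<in> nonneg_poly S"
    by (intro nonneg_poly_scaleR nonneg_poly_compose[OF S increment] nonneg_poly_add[OF Y1 Y0]) simp
  then show ?case
  proof (rule nonneg_poly_cong)
    fix x
    have "Y1 (Y1 x + Y0 x) - Y0 (Y1 x + Y0 x) = Y1 (Y1 x) - Y0 (Y0 x)"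
      using Y1_Y0[of x] by (simp add: bounded_clinear_add[OF B1] bounded_clinear_add[OF B0])
    moreover have "sqrt_iter S (Suc (Suc n)) x = (1/2) *\<^sub>R (S x + Y1 (Y1 x))"
      unfolding Y1_def by (simp only: sqrt_iter.simps(2))
    moreover have "sqrt_iter S (Suc n) x = (1/2) *\<^sub>R (S x + Y0 (Y0 x))"
      unfolding Y0_def by (simp only: sqrt_iter.simps(2))
    ultimately show "sqrt_iter S (Suc (Suc n)) x - sqrt_iter S (Suc n) x
        = (1/2) *\<^sub>R ((\<lambda>x. Y1 x - Y0 x) ((\<lambda>x. Y1 x + Y0 x) x))"
      by (simp only:) (simp add: algebra_simps)
  qed
qed

lemma sqrt_iter_diff_nonneg_poly:
  assumes S: "bounded_clinear S" and "n \<le> m"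
  shows "(\<lambda>x. sqrt_iter S m x - sqrt_iter S n x) \<in> nonneg_poly S"
  using \<open>n \<le> m\<close>
proof (induction m rule: dec_induct)
  case base
  show ?case by (rule nonneg_poly_cong[OF nonneg_poly.zero]) simp
next
  case (step m)
  have "(\<lambda>x. (sqrt_iter S (Suc m) x - sqrt_iter S m x) + (sqrt_iter S m x - sqrt_iter S n x))
      \<in> nonneg_poly S"
    by (rule nonneg_poly_add[OF sqrt_iter_increment_nonneg_poly[OF S] step.IH])
  then show ?case by (rule nonneg_poly_cong) simp
qed

definition sqrt_iter_limit :: "('a::complex_hilbert \<Rightarrow> 'a) \<Rightarrow> 'a \<Rightarrow> 'a" where
  "sqrt_iter_limit S x = lim (\<lambda>n. sqrt_iter S n x)"

context
  fixes S :: "'a::complex_hilbert \<Rightarrow> 'a"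
  assumes S: "bounded_clinear S" "selfadjoint S" "positive_op S" "\<And>x. norm (S x) \<le> norm x"
begin

lemma bounded_clinear_sqrt_iter: "bounded_clinear (sqrt_iter S n)"
  by (rule bounded_clinear_nonneg_poly[OF sqrt_iter_nonneg_poly[OF S(1)] S(1)])

lemma norm_sqrt_iter_diff_square:
  assumes "n \<le> m"
  shows "(norm (sqrt_iter S m x - sqrt_iter S n x))\<^sup>2
    \<le> 2 * (Re (cinner (sqrt_iter S m x) x) - Re (cinner (sqrt_iter S n x) x))"
proof -
  let ?D = "\<lambda>x. sqrt_iter S m x - sqrt_iter S n x"
  have D: "?D \<in> nonneg_poly S" by (rule sqrt_iter_diff_nonneg_poly[OF S(1) assms])
  have "norm (?D y) \<le> 2 * norm y" for y
    using norm_triangle_ineq4[of "sqrt_iter S m y" "sqrt_iter S n y"]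
      norm_sqrt_iter_le[OF S(4), of m y] norm_sqrt_iter_le[OF S(4), of n y] by linarith
  then have "(norm (?D x))\<^sup>2 \<le> 2 * Re (cinner (?D x) x)"
    by (intro norm_square_le_positive_op bounded_clinear_nonneg_poly[OF D S(1)]
        selfadjoint_nonneg_poly[OF D S(2)] positive_op_nonneg_poly[OF D S(2,3)]) simp_all
  then show ?thesis by (simp add: cinner_diff_left)
qed

lemma convergent_Re_cinner_sqrt_iter: "convergent (\<lambda>n. Re (cinner (sqrt_iter S n x) x))"
proof -
  define a where "a n = Re (cinner (sqrt_iter S n x) x)" for n
  have "incseq a"
  proof (rule incseq_SucI)
    fix n
    have "positive_op (\<lambda>x. sqrt_iter S (Suc n) x - sqrt_iter S n x)"
      by (rule positive_op_nonneg_poly[OF sqrt_iter_increment_nonneg_poly[OF S(1)] S(2,3)])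
    then show "a n \<le> a (Suc n)" by (simp add: a_def positive_op_def cinner_diff_left)
  qed
  moreover have "a n \<le> (norm x)\<^sup>2" for n
  proof -
    have "a n \<le> norm (sqrt_iter S n x) * norm x" unfolding a_def by (rule Re_cinner_le_norm)
    also have "\<dots> \<le> norm x * norm x" by (rule mult_right_mono[OF norm_sqrt_iter_le[OF S(4)]]) simp
    finally show ?thesis by (simp add: power2_eq_square)
  qed
  ultimately show ?thesis using incseq_convergent convergent_def unfolding a_def by metis
qed

lemma sqrt_iter_converges: "(\<lambda>n. sqrt_iter S n x) \<longlonglongrightarrow> sqrt_iter_limit S x"
proof -
  define a where "a n = Re (cinner (sqrt_iter S n x) x)" for n
  have "Cauchy a"
    unfolding a_def by (simp add: Cauchy_convergent_iff convergent_Re_cinner_sqrt_iter)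
  have "Cauchy (\<lambda>n. sqrt_iter S n x)"
  proof (rule metric_CauchyI)
    fix e :: real assume e: "e > 0"
    then obtain N where N: "\<And>m n. m \<ge> N \<Longrightarrow> n \<ge> N \<Longrightarrow> dist (a m) (a n) < e\<^sup>2 / 2"
      using metric_CauchyD[OF \<open>Cauchy a\<close>, of "e\<^sup>2 / 2"] by auto
    have close: "norm (sqrt_iter S m x - sqrt_iter S n x) < e" if "m \<ge> N" "n \<ge> N" "n \<le> m" for m n
    proof -
      have "(norm (sqrt_iter S m x - sqrt_iter S n x))\<^sup>2 \<le> 2 * (a m - a n)"
        unfolding a_def by (rule norm_sqrt_iter_diff_square[OF that(3)])
      also have "\<dots> < e\<^sup>2"
        using N[OF that(1,2)] unfolding dist_real_def abs_less_iff by (simp add: field_simps)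
      finally show ?thesis using e by (simp add: power_less_imp_less_base less_imp_le)
    qed
    have "dist (sqrt_iter S m x) (sqrt_iter S n x) < e" if "m \<ge> N" "n \<ge> N" for m n
      using close[of m n] close[of n m] that by (cases "n \<le> m") (auto simp: dist_norm norm_minus_commute)
    then show "\<exists>M. \<forall>m\<ge>M. \<forall>n\<ge>M. dist (sqrt_iter S m x) (sqrt_iter S n x) < e" by blast
  qed
  then show ?thesis
    by (simp add: sqrt_iter_limit_def Cauchy_convergent_iff convergent_LIMSEQ_iff)
qed

lemma sqrt_iter_limit_commute:
  assumes X: "bounded_clinear X" "\<And>x. X (S x) = S (X x)"
  shows "X (sqrt_iter_limit S x) = sqrt_iter_limit S (X x)"
proof -
  have "X (sqrt_iter S n x) = sqrt_iter S n (X x)" for n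
    by (rule nonneg_poly_commute[OF sqrt_iter_nonneg_poly[OF S(1)] X])
  then have "(\<lambda>n. sqrt_iter S n (X x)) \<longlonglongrightarrow> X (sqrt_iter_limit S x)"
    using bounded_clinear_tendsto[OF X(1) sqrt_iter_converges[of x]] by simp
  then show ?thesis using sqrt_iter_converges[of "X x"] LIMSEQ_unique by blast
qed

lemma norm_sqrt_iter_limit_le: "norm (sqrt_iter_limit S x) \<le> norm x"
  by (rule LIMSEQ_le_const2[OF tendsto_norm[OF sqrt_iter_converges]])
     (use norm_sqrt_iter_le[OF S(4)] in auto)

lemma bounded_clinear_sqrt_iter_limit: "bounded_clinear (sqrt_iter_limit S)"
proof (rule bounded_clinearI[where C=1])
  fix x y c
  have "(\<lambda>n. sqrt_iter S n (x + y)) \<longlonglongrightarrow> sqrt_iter_limit S x + sqrt_iter_limit S y"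
    using tendsto_add[OF sqrt_iter_converges[of x] sqrt_iter_converges[of y]]
    by (simp add: bounded_clinear_add[OF bounded_clinear_sqrt_iter])
  then show "sqrt_iter_limit S (x + y) = sqrt_iter_limit S x + sqrt_iter_limit S y"
    using sqrt_iter_converges[of "x + y"] LIMSEQ_unique by blast
  have "(\<lambda>n. sqrt_iter S n (scaleC c x)) \<longlonglongrightarrow> scaleC c (sqrt_iter_limit S x)"
    using tendsto_scaleC[OF sqrt_iter_converges[of x], of c]
    by (simp add: bounded_clinear_scaleC[OF bounded_clinear_sqrt_iter])
  then show "sqrt_iter_limit S (scaleC c x) = scaleC c (sqrt_iter_limit S x)"
    using sqrt_iter_converges[of "scaleC c x"] LIMSEQ_unique by blast
qed (simp add: norm_sqrt_iter_limit_le)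

lemma selfadjoint_sqrt_iter_limit: "selfadjoint (sqrt_iter_limit S)"
proof -
  have "cinner (sqrt_iter_limit S x) y = cinner x (sqrt_iter_limit S y)" for x y
  proof -
    have "cinner (sqrt_iter S n x) y = cinner x (sqrt_iter S n y)" for n
      by (rule selfadjointD[OF selfadjoint_nonneg_poly[OF sqrt_iter_nonneg_poly[OF S(1)] S(2)]])
    moreover have "(\<lambda>n. cinner (sqrt_iter S n x) y) \<longlonglongrightarrow> cinner (sqrt_iter_limit S x) y"
      and "(\<lambda>n. cinner x (sqrt_iter S n y)) \<longlonglongrightarrow> cinner x (sqrt_iter_limit S y)"
      by (intro tendsto_cinner sqrt_iter_converges tendsto_const)+
    ultimately show ?thesis using LIMSEQ_unique by simp
  qed
  then show ?thesis by (simp add: selfadjoint_iff)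
qed

lemma sqrt_iter_limit_fixpoint:
  "sqrt_iter_limit S x = (1/2) *\<^sub>R (S x + sqrt_iter_limit S (sqrt_iter_limit S x))"
proof -
  let ?Y = "sqrt_iter S" and ?L = "sqrt_iter_limit S"
  have "(\<lambda>n. ?Y n (?Y n x - ?L x)) \<longlonglongrightarrow> 0"
  proof (rule Lim_null_comparison[where g="\<lambda>n. norm (?Y n x - ?L x)"])
    show "\<forall>\<^sub>F n in sequentially. norm (?Y n (?Y n x - ?L x)) \<le> norm (?Y n x - ?L x)"
      using norm_sqrt_iter_le[OF S(4)] by simp
    show "(\<lambda>n. norm (?Y n x - ?L x)) \<longlonglongrightarrow> 0"
      by (intro tendsto_norm_zero LIM_zero sqrt_iter_converges)
  qed
  then have "(\<lambda>n. ?Y n (?Y n x - ?L x) + ?Y n (?L x)) \<longlonglongrightarrow> 0 + ?L (?L x)"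
    by (intro tendsto_add sqrt_iter_converges)
  then have "(\<lambda>n. ?Y n (?Y n x)) \<longlonglongrightarrow> ?L (?L x)"
    by (simp add: bounded_clinear_diff[OF bounded_clinear_sqrt_iter])
  then have "(\<lambda>n. ?Y (Suc n) x) \<longlonglongrightarrow> (1/2) *\<^sub>R (S x + ?L (?L x))"
    by (auto intro!: tendsto_intros)
  moreover have "(\<lambda>n. ?Y (Suc n) x) \<longlonglongrightarrow> ?L x"
    using sqrt_iter_converges[of x] by (rule LIMSEQ_Suc)
  ultimately show ?thesis using LIMSEQ_unique by blast
qed

end

lemma exists_sqrt_one_minus:
  fixes S :: "'a::complex_hilbert \<Rightarrow> 'a"
  assumes S: "bounded_clinear S" "selfadjoint S" "positive_op S" "\<And>x. norm (S x) \<le> norm x"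
  obtains R where "bounded_clinear R" "selfadjoint R" "positive_op R" "\<And>x. R (R x) = x - S x"
    "\<And>X x. bounded_clinear X \<Longrightarrow> (\<And>x. X (S x) = S (X x)) \<Longrightarrow> X (R x) = R (X x)"
proof -
  define Y where "Y = sqrt_iter_limit S"
  define R where "R x = x - Y x" for x
  have BY: "bounded_clinear Y" unfolding Y_def by (rule bounded_clinear_sqrt_iter_limit[OF S])
  have "bounded_clinear R"
    unfolding R_def by (rule bounded_clinear_minus_op[OF bounded_clinear_ident BY])
  moreover have "selfadjoint R"
    unfolding R_def Y_def by (rule selfadjoint_minus[OF selfadjoint_ident selfadjoint_sqrt_iter_limit[OF S]])
  moreover have "positive_op R"
  proof -
    have "Re (cinner (Y x) x) \<le> norm x * norm x" for x
    proof -
      have "Re (cinner (Y x) x) \<le> norm (Y x) * norm x" by (rule Re_cinner_le_norm)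
      also have "\<dots> \<le> norm x * norm x"
        unfolding Y_def by (rule mult_right_mono[OF norm_sqrt_iter_limit_le[OF S]]) simp
      finally show ?thesis .
    qed
    then show ?thesis
      by (simp add: positive_op_def R_def cinner_diff_left Re_cinner_self power2_eq_square)
  qed
  moreover have "R (R x) = x - S x" for x
  proof -
    define w where "w = S x + Y (Y x)"
    have "Y x = (1/2) *\<^sub>R w"
      unfolding Y_def w_def by (rule sqrt_iter_limit_fixpoint[OF S])
    then have "2 *\<^sub>R Y x = S x + Y (Y x)" unfolding w_def[symmetric] by simp
    moreover have "R (R x) = x - 2 *\<^sub>R Y x + Y (Y x)"
      by (simp add: R_def bounded_clinear_diff[OF BY] scaleR_2 algebra_simps)
    ultimately show ?thesis by (simp add: algebra_simps)
  qed
  moreover have "X (R x) = R (X x)" if "bounded_clinear X" "\<And>x. X (S x) = S (X x)" for X x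
    using sqrt_iter_limit_commute[OF S that]
    by (simp add: R_def Y_def bounded_clinear_diff[OF that(1)])
  ultimately show ?thesis using that by blast
qed

section \<open>Spectral subspaces without the spectral theorem\<close>

lemma closed_csubspace_closure_range:
  assumes T: "bounded_clinear T"
  shows "closed_csubspace (closure (range T))"
proof (rule closed_csubspace_closure)
  show "0 \<in> range T" using bounded_clinear_zero[OF T] by (metis rangeI)
  show "x + y \<in> range T" if xy: "x \<in> range T" "y \<in> range T" for x y
  proof -
    obtain u v where "x = T u" "y = T v" using xy by blast
    then have "x + y = T (u + v)" by (simp add: bounded_clinear_add[OF T])
    then show ?thesis by simp
  qed
  show "scaleC c x \<in> range T" if x: "x \<in> range T" for c x
  proof -
    obtain u where "x = T u" using x by blast
    then have "scaleC c x = T (scaleC c u)" by (simp add: bounded_clinear_scaleC[OF T])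
    then show ?thesis by simp
  qed
qed

lemma orthogonal_complement_kernel_subset_closure_range:
  assumes T: "bounded_clinear T" "selfadjoint T"
  shows "orthogonal_complement {x. T x = 0} \<subseteq> closure (range T)"
proof
  fix x assume x: "x \<in> orthogonal_complement {x. T x = 0}"
  show "x \<in> closure (range T)"
  proof (rule mem_if_orthogonal_to_complement[OF closed_csubspace_closure_range[OF T(1)]])
    fix y assume y: "y \<in> orthogonal_complement (closure (range T))"
    have "T (T y) \<in> closure (range T)" using closure_subset[of "range T"] by blast
    then have "cinner (T (T y)) y = 0" using y by (simp add: orthogonal_complement_iff)
    then have "cinner (T y) (T y) = 0" by (simp add: selfadjointD[OF T(2)])
    then show "cinner y x = 0" using x by (simp add: orthogonal_complement_iff)
  qed
qed

lemma closed_Re_cinner_nonneg: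
  assumes "bounded_clinear C"
  shows "closed {y. 0 \<le> Re (cinner (C y) y)}"
proof -
  have "isCont (\<lambda>y. Re (cinner (C y) y)) y" for y
    unfolding isCont_def
    by (intro tendsto_Re tendsto_cinner bounded_clinear_tendsto[OF assms] tendsto_ident_at)
  then have "continuous_on UNIV (\<lambda>y. Re (cinner (C y) y))"
    by (simp add: continuous_at_imp_continuous_on)
  then show ?thesis using closed_Collect_le[of "\<lambda>y. 0" "\<lambda>y. Re (cinner (C y) y)"] by simp
qed

lemma one_minus_scaled_square_positive_contraction:
  fixes C S :: "'a::complex_hilbert \<Rightarrow> 'a"
  assumes C: "bounded_clinear C" "selfadjoint C"
    and k: "k > 0" and C_sq: "\<And>x. (norm (C x))\<^sup>2 \<le> k * (norm x)\<^sup>2"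
    and S_def: "\<And>x. S x = x - (1/k) *\<^sub>R C (C x)"
  shows "bounded_clinear S" "selfadjoint S" "positive_op S" "norm (S x) \<le> norm x"
proof -
  have CC: "Re (cinner (C (C x)) x) = (norm (C x))\<^sup>2" for x by (rule cinner_selfadjoint_square[OF C(2)])
  have S_eq: "S = (\<lambda>x. x - (1/k) *\<^sub>R C (C x))" by (rule ext) (rule S_def)
  show "bounded_clinear S"
    unfolding S_eq by (rule bounded_clinear_minus_op[OF bounded_clinear_ident
        bounded_clinear_scaleR_op[OF bounded_clinear_compose[OF C(1) C(1)]]])
  show "selfadjoint S"
    unfolding S_eq by (rule selfadjoint_minus[OF selfadjoint_ident
        selfadjoint_scaleR[OF selfadjoint_compose_commuting[OF C(2) C(2) refl]]])
  have "Re (cinner (S x) x) = (norm x)\<^sup>2 - (1/k) * (norm (C x))\<^sup>2" for x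
    by (simp add: S_def cinner_diff_left cinner_scaleR_left Re_cinner_self CC)
  moreover have "(1/k) * (norm (C x))\<^sup>2 \<le> (norm x)\<^sup>2" for x
    using C_sq[of x] k by (simp add: field_simps)
  ultimately show "positive_op S" by (simp add: positive_op_def)
  show "norm (S x) \<le> norm x"
  proof (rule power2_le_imp_le)
    have "(norm (C (C x)) / k)\<^sup>2 \<le> (k * (norm (C x))\<^sup>2) / k\<^sup>2"
      unfolding power_divide by (rule divide_right_mono[OF C_sq]) simp
    also have "\<dots> = (1/k) * (norm (C x))\<^sup>2" using k by (simp add: power2_eq_square field_simps)
    finally have "(norm (C (C x)) / k)\<^sup>2 \<le> (1/k) * (norm (C x))\<^sup>2" .
    moreover have "(norm (S x))\<^sup>2 = (norm x)\<^sup>2 + (norm (C (C x)) / k)\<^sup>2 - 2 * ((1/k) * (norm (C x))\<^sup>2)"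
      using k by (simp add: S_def norm_diff_square cinner_scaleR_right Re_cinner_commute[of x] CC)
    moreover have "0 \<le> (1/k) * (norm (C x))\<^sup>2" using k by simp
    ultimately show "(norm (S x))\<^sup>2 \<le> (norm x)\<^sup>2" by linarith
  qed simp
qed

text \<open>The absolute value \<open>|C| = \<surd>(C\<^sup>2)\<close>, as \<open>\<surd>k\<close> times the square root of \<open>1 - (1 - C\<^sup>2/k)\<close>
  for any \<open>k \<ge> \<parallel>C\<parallel>\<^sup>2\<close>.\<close>

lemma exists_abs_op:
  fixes C :: "'a::complex_hilbert \<Rightarrow> 'a"
  assumes C: "bounded_clinear C" "selfadjoint C"
  obtains P where "bounded_clinear P" "selfadjoint P" "positive_op P" "\<And>x. P (P x) = C (C x)"
    "\<And>X x. bounded_clinear X \<Longrightarrow> (\<And>x. X (C x) = C (X x)) \<Longrightarrow> X (P x) = P (X x)"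
proof -
  obtain c where c: "c > 0" "\<And>x. norm (C x) \<le> c * norm x" using bounded_clinear_bound[OF C(1)] by blast
  define k where "k = c\<^sup>2"
  have k: "k > 0" using c(1) by (simp add: k_def)
  have C_sq: "(norm (C x))\<^sup>2 \<le> k * (norm x)\<^sup>2" for x
    unfolding k_def power_mult_distrib[symmetric] using c by (intro power_mono) simp_all
  define S where "S x = x - (1/k) *\<^sub>R C (C x)" for x
  note S = one_minus_scaled_square_positive_contraction[OF C k C_sq S_def]
  obtain R where R: "bounded_clinear R" "selfadjoint R" "positive_op R"
      "\<And>x. R (R x) = x - S x"
    and R_commute: "\<And>X x. bounded_clinear X \<Longrightarrow> (\<And>x. X (S x) = S (X x)) \<Longrightarrow> X (R x) = R (X x)"
    using exists_sqrt_one_minus[OF S] by blast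
  show ?thesis
  proof
    show "bounded_clinear (\<lambda>x. sqrt k *\<^sub>R R x)" by (rule bounded_clinear_scaleR_op[OF R(1)])
    show "selfadjoint (\<lambda>x. sqrt k *\<^sub>R R x)" by (rule selfadjoint_scaleR[OF R(2)])
    show "positive_op (\<lambda>x. sqrt k *\<^sub>R R x)"
      using R(3) k by (simp add: positive_op_def cinner_scaleR_left)
    show "sqrt k *\<^sub>R R (sqrt k *\<^sub>R R x) = C (C x)" for x
      using R(4)[of x] k by (simp add: bounded_clinear_scaleR[OF R(1)] S_def)
    fix X x assume X: "bounded_clinear X" "\<And>x. X (C x) = C (X x)"
    have XS: "X (S x) = S (X x)" for x
      by (simp add: S_def bounded_clinear_diff[OF X(1)] bounded_clinear_scaleR[OF X(1)] X(2))
    show "X (sqrt k *\<^sub>R R x) = sqrt k *\<^sub>R R (X x)"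
      using R_commute[OF X(1) XS] by (simp add: bounded_clinear_scaleR[OF X(1)])
  qed
qed

lemma Re_cinner_nonneg_on_orthogonal_complement_kernel:
  fixes C P :: "'a::complex_hilbert \<Rightarrow> 'a"
  assumes C: "bounded_clinear C" "selfadjoint C"
    and P: "bounded_clinear P" "selfadjoint P" "positive_op P" "\<And>x. P (P x) = C (C x)"
      "\<And>x. P (C x) = C (P x)"
    and x: "x \<in> orthogonal_complement {x. P x + C x = 0}"
  shows "0 \<le> Re (cinner (C x) x)"
proof -
  \<comment> \<open>on the range of \<open>P + C\<close> the operators \<open>C\<close> and \<open>P\<close> agree, so \<open>C\<close> is positive there\<close>
  have "range (\<lambda>x. P x + C x) \<subseteq> {y. 0 \<le> Re (cinner (C y) y)}"
  proof clarify
    fix z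
    have "C (P z + C z) = P (P z + C z)"
      using P(4,5)[of z] by (simp add: bounded_clinear_add[OF C(1)] bounded_clinear_add[OF P(1)])
    then show "0 \<le> Re (cinner (C (P z + C z)) (P z + C z))" using P(3) by (simp add: positive_op_def)
  qed
  then have "closure (range (\<lambda>x. P x + C x)) \<subseteq> {y. 0 \<le> Re (cinner (C y) y)}"
    by (rule closure_minimal[OF _ closed_Re_cinner_nonneg[OF C(1)]])
  moreover have "x \<in> closure (range (\<lambda>x. P x + C x))"
    using orthogonal_complement_kernel_subset_closure_range[OF bounded_clinear_plus[OF P(1) C(1)]
        selfadjoint_plus[OF P(2) C(2)]] x by blast
  ultimately show ?thesis by auto
qed

text \<open>The spectral subspace of \<open>A\<^sup>2\<close> for \<open>[0, \<epsilon>]\<close> is the kernel of the positive part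
  \<open>(|C| + C)/2\<close> of \<open>C = A\<^sup>2 - \<epsilon>\<close>.\<close>

lemma exists_spectral_subspace:
  fixes A :: "'a::complex_hilbert \<Rightarrow> 'a"
  assumes A: "bounded_clinear A" "selfadjoint A"
  obtains G where "closed_csubspace G" "\<And>x. x \<in> G \<Longrightarrow> (norm (A x))\<^sup>2 \<le> \<epsilon> * (norm x)\<^sup>2"
    "\<And>x. x \<in> orthogonal_complement G \<Longrightarrow> \<epsilon> * (norm x)\<^sup>2 \<le> (norm (A x))\<^sup>2"
    "\<And>X x. bounded_clinear X \<Longrightarrow> (\<And>x. X (A x) = A (X x)) \<Longrightarrow> x \<in> G \<Longrightarrow> X x \<in> G"
proof -
  define C where "C x = A (A x) - \<epsilon> *\<^sub>R x" for x
  have BC: "bounded_clinear C"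
    unfolding C_def by (rule bounded_clinear_minus_op[OF bounded_clinear_compose[OF A(1) A(1)]
        bounded_clinear_scaleR_op[OF bounded_clinear_ident]])
  have SC: "selfadjoint C"
    unfolding C_def by (rule selfadjoint_minus[OF selfadjoint_compose_commuting[OF A(2) A(2) refl]
          selfadjoint_scaleR[OF selfadjoint_ident]])
  have Re_C: "Re (cinner (C x) x) = (norm (A x))\<^sup>2 - \<epsilon> * (norm x)\<^sup>2" for x
    by (simp add: C_def cinner_diff_left cinner_scaleR_left cinner_selfadjoint_square[OF A(2)]
        Re_cinner_self)
  obtain P where P: "bounded_clinear P" "selfadjoint P" "positive_op P" "\<And>x. P (P x) = C (C x)"
    and P_commute: "\<And>X x. bounded_clinear X \<Longrightarrow> (\<And>x. X (C x) = C (X x)) \<Longrightarrow> X (P x) = P (X x)"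
    using exists_abs_op[OF BC SC] by blast
  have C_commute: "X (C x) = C (X x)" if "bounded_clinear X" "\<And>x. X (A x) = A (X x)" for X x
    using that by (simp add: C_def bounded_clinear_diff[OF that(1)] bounded_clinear_scaleR[OF that(1)])
  define G where "G = {x. P x + C x = 0}"
  show ?thesis
  proof
    show "closed_csubspace G"
      unfolding G_def by (rule closed_csubspace_kernel[OF bounded_clinear_plus[OF P(1) BC]])
  next
    fix x assume "x \<in> G"
    then have "C x = - P x" by (simp add: G_def eq_neg_iff_add_eq_0 add.commute)
    then have "Re (cinner (C x) x) = - Re (cinner (P x) x)" by (simp add: cinner_minus_left)
    moreover have "0 \<le> Re (cinner (P x) x)" using P(3) by (simp add: positive_op_def)
    ultimately show "(norm (A x))\<^sup>2 \<le> \<epsilon> * (norm x)\<^sup>2" using Re_C[of x] by simp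
  next
    fix x assume "x \<in> orthogonal_complement G"
    then have "0 \<le> Re (cinner (C x) x)"
      unfolding G_def
      by (rule Re_cinner_nonneg_on_orthogonal_complement_kernel[OF BC SC P P_commute[OF BC refl, symmetric]])
    then show "\<epsilon> * (norm x)\<^sup>2 \<le> (norm (A x))\<^sup>2" using Re_C[of x] by simp
  next
    fix X x assume X: "bounded_clinear X" "\<And>x. X (A x) = A (X x)" and "x \<in> G"
    have "P (X x) + C (X x) = X (P x + C x)"
      using X by (simp add: bounded_clinear_add[OF X(1)] P_commute C_commute)
    then show "X x \<in> G" using \<open>x \<in> G\<close> by (simp add: G_def bounded_clinear_zero[OF X(1)])
  qed
qed

lemma cspan_base: "v \<in> S \<Longrightarrow> v \<in> cspan S"
  unfolding cspan_def
  by (rule CollectI, rule exI[of _ "{v}"], rule exI[of _ "\<lambda>_. 1"]) (simp add: scaleC_one)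

lemma cspanI: "finite F \<Longrightarrow> F \<subseteq> S \<Longrightarrow> (\<Sum>v\<in>F. scaleC (c v) v) \<in> cspan S"
  unfolding cspan_def by blast

lemma cspanE:
  assumes "x \<in> cspan S"
  obtains F c where "finite F" "F \<subseteq> S" "x = (\<Sum>v\<in>F. scaleC (c v) v)"
  using assms unfolding cspan_def by blast

lemma cspan_add:
  assumes "x \<in> cspan S" "y \<in> cspan S"
  shows "x + y \<in> cspan S"
proof -
  obtain F c where F: "finite F" "F \<subseteq> S" "x = (\<Sum>v\<in>F. scaleC (c v) v)"
    using assms(1) by (rule cspanE)
  obtain G d where G: "finite G" "G \<subseteq> S" "y = (\<Sum>v\<in>G. scaleC (d v) v)"
    using assms(2) by (rule cspanE)
  define e where "e v = (if v \<in> F then c v else 0) + (if v \<in> G then d v else 0)" for v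
  have "scaleC (e v) v
      = (if v \<in> F then scaleC (c v) v else 0) + (if v \<in> G then scaleC (d v) v else 0)" for v
    by (simp add: e_def scaleC_add_left)
  then have "(\<Sum>v\<in>F \<union> G. scaleC (e v) v)
      = (\<Sum>v\<in>F \<union> G. if v \<in> F then scaleC (c v) v else 0)
        + (\<Sum>v\<in>F \<union> G. if v \<in> G then scaleC (d v) v else 0)"
    by (simp add: sum.distrib)
  also have "\<dots> = (\<Sum>v\<in>(F \<union> G) \<inter> F. scaleC (c v) v) + (\<Sum>v\<in>(F \<union> G) \<inter> G. scaleC (d v) v)"
    by (simp only: sum.inter_restrict[OF finite_UnI[OF F(1) G(1)]])
  also have "\<dots> = x + y" using F(3) G(3) by (simp add: Int_absorb2)
  finally have "x + y = (\<Sum>v\<in>F \<union> G. scaleC (e v) v)" ..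
  also have "\<dots> \<in> cspan S" by (rule cspanI) (use F G in auto)
  finally show ?thesis .
qed

lemma cspan_scaleC:
  assumes "x \<in> cspan S"
  shows "scaleC a x \<in> cspan S"
proof -
  obtain F c where F: "finite F" "F \<subseteq> S" "x = (\<Sum>v\<in>F. scaleC (c v) v)"
    using assms by (rule cspanE)
  then have "scaleC a x = (\<Sum>v\<in>F. scaleC (a * c v) v)"
    by (simp add: scaleC_sum_right scaleC_scaleC)
  also have "\<dots> \<in> cspan S" by (rule cspanI[OF F(1,2)])
  finally show ?thesis .
qed

lemma cspan_subset:
  assumes W: "closed_csubspace W" and S: "S \<subseteq> W"
  shows "cspan S \<subseteq> W"
proof
  fix x assume "x \<in> cspan S"
  then obtain F c where F: "F \<subseteq> S" "x = (\<Sum>v\<in>F. scaleC (c v) v)" by (rule cspanE)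
  show "x \<in> W"
    unfolding F(2) by (rule closed_csubspace_sum[OF W]) (use F(1) S closed_csubspace_scaleC[OF W] in blast)
qed

lemma closed_csubspace_closure_cspan: "closed_csubspace (closure (cspan S))"
proof (rule closed_csubspace_closure)
  show "0 \<in> cspan S" unfolding cspan_def by (rule CollectI, rule exI[of _ "{}"]) auto
qed (simp_all add: cspan_add cspan_scaleC)

lemma closure_cspan_subset:
  "closed_csubspace W \<Longrightarrow> S \<subseteq> W \<Longrightarrow> closure (cspan S) \<subseteq> W"
  by (rule closure_minimal[OF cspan_subset closed_csubspace_closed])

lemma subset_closure_cspan: "S \<subseteq> closure (cspan S)"
  using cspan_base closure_subset by blast

lemma closure_cspan_invariant:
  assumes T: "bounded_clinear T" and inv: "\<And>x. x \<in> S \<Longrightarrow> T x \<in> S"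
    and x: "x \<in> closure (cspan S)"
  shows "T x \<in> closure (cspan S)"
proof -
  have "S \<subseteq> {x. T x \<in> closure (cspan S)}" using inv subset_closure_cspan by blast
  then have "closure (cspan S) \<subseteq> {x. T x \<in> closure (cspan S)}"
    by (rule closure_cspan_subset[OF closed_csubspace_vimage[OF T closed_csubspace_closure_cspan]])
  then show ?thesis using x by blast
qed

lemma closure_cspan_empty: "closure (cspan {}) = {0::'a::complex_hilbert}"
proof -
  have "closed_csubspace {0::'a}" by (simp add: closed_csubspace_def)
  then show ?thesis
    using closure_cspan_subset[of "{0::'a}" "{}"] closed_csubspace_zero[OF closed_csubspace_closure_cspan]
    by blast
qed

lemma orthogonal_complement_invariant:
  assumes "selfadjoint A" "\<And>x. x \<in> U \<Longrightarrow> A x \<in> U" "x \<in> orthogonal_complement U"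
  shows "A x \<in> orthogonal_complement U"
proof -
  have "cinner u (A x) = cinner (A u) x" for u using selfadjointD[OF assms(1)] by simp
  then show ?thesis using assms(2,3) by (simp add: orthogonal_complement_iff)
qed

lemma projection_commute:
  assumes A: "bounded_clinear A" "selfadjoint A"
    and K: "closed_csubspace K" and inv: "\<And>x. x \<in> K \<Longrightarrow> A x \<in> K"
  shows "projection K (A x) = A (projection K x)"
proof (rule projection_eqI[OF K])
  show "A (projection K x) \<in> K" by (rule inv[OF projection_in(1)[OF K]])
  have "A x - A (projection K x) = A (x - projection K x)" by (simp add: bounded_clinear_diff[OF A(1)])
  also have "\<dots> \<in> orthogonal_complement K"
    by (rule orthogonal_complement_invariant[OF A(2) inv projection_in(2)[OF K]])
  finally show "A x - A (projection K x) \<in> orthogonal_complement K" .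
qed

lemma closed_range_if_bounded_below:
  assumes A: "bounded_clinear A" and d: "d > 0" "\<And>x. d * norm x \<le> norm (A x)"
  shows "closed (range A)"
  unfolding closed_sequential_limits
proof (intro allI impI, elim conjE)
  fix f y assume f: "\<forall>n. f n \<in> range A" "f \<longlonglongrightarrow> y"
  have "\<forall>n. \<exists>x. f n = A x" using f(1) by blast
  then obtain g where g: "\<And>n. f n = A (g n)" by metis
  have "Cauchy g"
  proof (rule metric_CauchyI)
    fix e :: real assume "e > 0"
    then obtain N where N: "\<And>m n. m \<ge> N \<Longrightarrow> n \<ge> N \<Longrightarrow> dist (f m) (f n) < d * e"
      using metric_CauchyD[OF LIMSEQ_imp_Cauchy[OF f(2)], of "d * e"] d(1) by auto
    have "dist (g m) (g n) < e" if "m \<ge> N" "n \<ge> N" for m n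
    proof -
      have "d * dist (g m) (g n) \<le> dist (f m) (f n)"
        using d(2)[of "g m - g n"] by (simp add: g dist_norm bounded_clinear_diff[OF A])
      then have "d * dist (g m) (g n) < d * e" using N[OF that] by linarith
      then show ?thesis using d(1) by simp
    qed
    then show "\<exists>M. \<forall>m\<ge>M. \<forall>n\<ge>M. dist (g m) (g n) < e" by blast
  qed
  then obtain x where "g \<longlonglongrightarrow> x" using Cauchy_convergent_iff convergent_def by blast
  then have "f \<longlonglongrightarrow> A x" unfolding g by (rule bounded_clinear_tendsto[OF A])
  then show "y \<in> range A" using f(2) LIMSEQ_unique by blast
qed

lemma invertible_if_bounded_below:
  fixes A :: "'a::complex_hilbert \<Rightarrow> 'a"
  assumes A: "bounded_clinear A" "selfadjoint A" and d: "d > 0" "\<And>x. d * norm x \<le> norm (A x)"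
  shows "invertible_on UNIV A"
proof -
  have inj: "x = y" if "A x = A y" for x y
    using d(2)[of "x - y"] d(1) that by (simp add: bounded_clinear_diff[OF A(1)] mult_le_0_iff)
  \<comment> \<open>the range is closed and, by self-adjointness, dense: its closure contains the
    orthogonal complement of the trivial kernel\<close>
  have "orthogonal_complement {x. A x = 0} \<subseteq> range A"
    using orthogonal_complement_kernel_subset_closure_range[OF A]
      closed_range_if_bounded_below[OF A(1) d] by simp
  moreover have "{x. A x = 0} = {0}" using inj bounded_clinear_zero[OF A(1)] by auto
  ultimately have surj: "surj A" by (auto simp: orthogonal_complement_def)
  define B where "B = inv A"
  have AB: "A (B y) = y" for y unfolding B_def by (rule surj_f_inv_f[OF surj])
  have BA: "B (A x) = x" for x using AB[of "A x"] inj by blast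
  have "bounded_clinear B"
  proof (rule bounded_clinearI[where C="1/d"])
    show "B (x + y) = B x + B y" for x y by (rule inj) (simp add: AB bounded_clinear_add[OF A(1)])
    show "B (scaleC c x) = scaleC c (B x)" for c x
      by (rule inj) (simp add: AB bounded_clinear_scaleC[OF A(1)])
    show "norm (B y) \<le> 1 / d * norm y" for y
      using d(2)[of "B y"] d(1) by (simp add: AB field_simps)
  qed
  then show ?thesis unfolding invertible_on_def using AB BA by blast
qed

lemma not_invertible_on_if_approximate_kernel:
  assumes small: "\<And>\<delta>. \<delta> > 0 \<Longrightarrow> \<exists>x\<in>K. x \<noteq> 0 \<and> (norm (A x))\<^sup>2 \<le> \<delta> * (norm x)\<^sup>2"
    and inv: "\<And>x. x \<in> K \<Longrightarrow> A x \<in> K"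
  shows "\<not> invertible_on K A"
proof
  assume "invertible_on K A"
  then obtain B where B: "bounded_clinear_on K B" "\<forall>x\<in>K. B (A x) = x"
    unfolding invertible_on_def by blast
  obtain C where C: "\<forall>x\<in>K. norm (B x) \<le> C * norm x"
    using B(1) unfolding bounded_clinear_on_def by blast
  define \<delta> where "\<delta> = 1 / (C\<^sup>2 + 1)"
  have "C\<^sup>2 + 1 > 0" by (simp add: add_nonneg_pos)
  then obtain x where x: "x \<in> K" "x \<noteq> 0" "(norm (A x))\<^sup>2 \<le> \<delta> * (norm x)\<^sup>2"
    using small[of \<delta>] by (auto simp: \<delta>_def)
  have "norm x = norm (B (A x))" using B(2) x(1) by simp
  also have "\<dots> \<le> C * norm (A x)" using C inv[OF x(1)] by blast
  also have "\<dots> \<le> \<bar>C\<bar> * norm (A x)" by (simp add: mult_right_mono)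
  finally have "(norm x)\<^sup>2 \<le> (\<bar>C\<bar> * norm (A x))\<^sup>2" by (rule power_mono) simp
  also have "\<dots> \<le> C\<^sup>2 * (\<delta> * (norm x)\<^sup>2)"
    unfolding power_mult_distrib power2_abs by (rule mult_left_mono[OF x(3)]) simp
  also have "\<dots> = (C\<^sup>2 / (C\<^sup>2 + 1)) * (norm x)\<^sup>2" by (simp add: \<delta>_def)
  also have "\<dots> < 1 * (norm x)\<^sup>2"
    using \<open>C\<^sup>2 + 1 > 0\<close> x(2) by (intro mult_strict_right_mono) simp_all
  finally show False by simp
qed

locale bounded_selfadjoint_op =
  fixes A :: "'a::complex_hilbert \<Rightarrow> 'a"
  assumes bounded: "bounded_clinear A" and selfadjoint: "selfadjoint A"
begin

text \<open>Some subspace with the properties of the spectral subspace of \<open>A\<^sup>2\<close> for \<open>[0, \<epsilon>]\<close>.\<close>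

definition spectral_subspace :: "real \<Rightarrow> 'a set" where
  "spectral_subspace \<epsilon> = (SOME G. closed_csubspace G
     \<and> (\<forall>x\<in>G. (norm (A x))\<^sup>2 \<le> \<epsilon> * (norm x)\<^sup>2)
     \<and> (\<forall>x\<in>orthogonal_complement G. \<epsilon> * (norm x)\<^sup>2 \<le> (norm (A x))\<^sup>2)
     \<and> (\<forall>X. bounded_clinear X \<longrightarrow> (\<forall>x. X (A x) = A (X x)) \<longrightarrow> (\<forall>x\<in>G. X x \<in> G)))"

lemma spectral_subspace:
  shows closed_csubspace_spectral_subspace: "closed_csubspace (spectral_subspace \<epsilon>)"
    and norm_le_on_spectral_subspace:
      "x \<in> spectral_subspace \<epsilon> \<Longrightarrow> (norm (A x))\<^sup>2 \<le> \<epsilon> * (norm x)\<^sup>2"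
    and norm_ge_on_orthogonal_complement:
      "x \<in> orthogonal_complement (spectral_subspace \<epsilon>) \<Longrightarrow> \<epsilon> * (norm x)\<^sup>2 \<le> (norm (A x))\<^sup>2"
    and spectral_subspace_commutant_invariant:
      "bounded_clinear X \<Longrightarrow> (\<And>x. X (A x) = A (X x)) \<Longrightarrow> x \<in> spectral_subspace \<epsilon>
        \<Longrightarrow> X x \<in> spectral_subspace \<epsilon>"
proof -
  obtain G where "closed_csubspace G" "\<And>x. x \<in> G \<Longrightarrow> (norm (A x))\<^sup>2 \<le> \<epsilon> * (norm x)\<^sup>2"
    "\<And>x. x \<in> orthogonal_complement G \<Longrightarrow> \<epsilon> * (norm x)\<^sup>2 \<le> (norm (A x))\<^sup>2"
    "\<And>X x. bounded_clinear X \<Longrightarrow> (\<And>x. X (A x) = A (X x)) \<Longrightarrow> x \<in> G \<Longrightarrow> X x \<in> G"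
    using exists_spectral_subspace[OF bounded selfadjoint] by blast
  then have "\<exists>G. closed_csubspace G
     \<and> (\<forall>x\<in>G. (norm (A x))\<^sup>2 \<le> \<epsilon> * (norm x)\<^sup>2)
     \<and> (\<forall>x\<in>orthogonal_complement G. \<epsilon> * (norm x)\<^sup>2 \<le> (norm (A x))\<^sup>2)
     \<and> (\<forall>X. bounded_clinear X \<longrightarrow> (\<forall>x. X (A x) = A (X x)) \<longrightarrow> (\<forall>x\<in>G. X x \<in> G))"
    by blast
  from someI_ex[OF this, folded spectral_subspace_def]
  show "closed_csubspace (spectral_subspace \<epsilon>)"
    and "x \<in> spectral_subspace \<epsilon> \<Longrightarrow> (norm (A x))\<^sup>2 \<le> \<epsilon> * (norm x)\<^sup>2"
    and "x \<in> orthogonal_complement (spectral_subspace \<epsilon>) \<Longrightarrow> \<epsilon> * (norm x)\<^sup>2 \<le> (norm (A x))\<^sup>2"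
    and "bounded_clinear X \<Longrightarrow> (\<And>x. X (A x) = A (X x)) \<Longrightarrow> x \<in> spectral_subspace \<epsilon>
        \<Longrightarrow> X x \<in> spectral_subspace \<epsilon>"
    by blast+
qed

lemma spectral_subspace_invariant: "x \<in> spectral_subspace \<epsilon> \<Longrightarrow> A x \<in> spectral_subspace \<epsilon>"
  by (rule spectral_subspace_commutant_invariant[OF bounded]) auto

lemma projection_spectral_subspace_in:
  "x \<in> spectral_subspace \<epsilon> \<Longrightarrow> projection (spectral_subspace \<epsilon>') x \<in> spectral_subspace \<epsilon>"
  by (rule spectral_subspace_commutant_invariant
      [OF bounded_clinear_projection[OF closed_csubspace_spectral_subspace]])
     (simp add: projection_commute[OF bounded selfadjoint closed_csubspace_spectral_subspace
       spectral_subspace_invariant])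

lemma spectral_subspace_mono:
  assumes "\<epsilon> < \<epsilon>'" and x: "x \<in> spectral_subspace \<epsilon>"
  shows "x \<in> spectral_subspace \<epsilon>'"
proof -
  \<comment> \<open>the component of \<open>x\<close> orthogonal to the larger subspace satisfies both bounds\<close>
  define v where "v = x - projection (spectral_subspace \<epsilon>') x"
  have "v \<in> spectral_subspace \<epsilon>"
    unfolding v_def by (intro closed_csubspace_diff closed_csubspace_spectral_subspace x
        projection_spectral_subspace_in)
  moreover have "v \<in> orthogonal_complement (spectral_subspace \<epsilon>')"
    unfolding v_def by (rule projection_in(2)[OF closed_csubspace_spectral_subspace])
  ultimately have "\<epsilon>' * (norm v)\<^sup>2 \<le> \<epsilon> * (norm v)\<^sup>2"
    using norm_le_on_spectral_subspace[of v \<epsilon>] norm_ge_on_orthogonal_complement[of v \<epsilon>'] by linarith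
  then have "(norm v)\<^sup>2 \<le> 0" using \<open>\<epsilon> < \<epsilon>'\<close> by (simp add: mult_le_cancel_right)
  then have "x = projection (spectral_subspace \<epsilon>') x" by (simp add: v_def)
  then show ?thesis using projection_in(1)[OF closed_csubspace_spectral_subspace] by metis
qed

lemma spectral_subspace_nontrivial:
  assumes "\<not> invertible_on UNIV A" "\<epsilon> > 0"
  obtains x where "x \<in> spectral_subspace \<epsilon>" "x \<noteq> 0"
proof -
  have "sqrt \<epsilon> * norm x \<le> norm (A x)" if "spectral_subspace \<epsilon> = {0}" for x
  proof -
    have "x \<in> orthogonal_complement (spectral_subspace \<epsilon>)"
      using that by (simp add: orthogonal_complement_iff)
    then have "sqrt (\<epsilon> * (norm x)\<^sup>2) \<le> sqrt ((norm (A x))\<^sup>2)"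
      by (intro real_sqrt_le_mono norm_ge_on_orthogonal_complement)
    then show ?thesis using assms(2) by (simp add: real_sqrt_mult)
  qed
  then have "spectral_subspace \<epsilon> \<noteq> {0}"
    using assms invertible_if_bounded_below[OF bounded selfadjoint, of "sqrt \<epsilon>"] by auto
  then show ?thesis
    using that closed_csubspace_zero[OF closed_csubspace_spectral_subspace] by blast
qed

end

section \<open>Layers of the spectrum accumulating at zero\<close>

locale injective_noninvertible_op = bounded_selfadjoint_op +
  assumes inj: "inj A" and not_invertible: "\<not> invertible_on UNIV A"
begin

text \<open>Since \<open>A\<close> is injective, no nonzero vector lies in every spectral subspace; since \<open>A\<close>
  is not invertible, every spectral subspace for \<open>\<epsilon> > 0\<close> is nontrivial. So each level \<open>\<epsilon>\<close> can
  be followed by a level \<open>\<epsilon>' \<le> \<epsilon>/2\<close> leaving a nontrivial layer in between.\<close>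

lemma exists_next_level:
  assumes "\<epsilon> > 0"
  shows "\<exists>\<epsilon>'. 0 < \<epsilon>' \<and> \<epsilon>' \<le> \<epsilon> / 2
    \<and> (\<exists>y. y \<noteq> 0 \<and> y \<in> spectral_subspace \<epsilon> \<and> y \<in> orthogonal_complement (spectral_subspace \<epsilon>'))"
proof -
  obtain x where x: "x \<in> spectral_subspace \<epsilon>" "x \<noteq> 0"
    using spectral_subspace_nontrivial[OF not_invertible assms] .
  have "A x \<noteq> 0" using x(2) inj bounded_clinear_zero[OF bounded] by (metis injD)
  define \<epsilon>' where "\<epsilon>' = min (\<epsilon> / 2) ((norm (A x))\<^sup>2 / (2 * (norm x)\<^sup>2))"
  have \<epsilon>': "0 < \<epsilon>'" "\<epsilon>' \<le> \<epsilon> / 2" using assms \<open>A x \<noteq> 0\<close> x(2) by (auto simp: \<epsilon>'_def)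
  have "x \<notin> spectral_subspace \<epsilon>'"
  proof
    assume "x \<in> spectral_subspace \<epsilon>'"
    then have "(norm (A x))\<^sup>2 \<le> \<epsilon>' * (norm x)\<^sup>2" by (rule norm_le_on_spectral_subspace)
    also have "\<dots> \<le> (norm (A x))\<^sup>2 / (2 * (norm x)\<^sup>2) * (norm x)\<^sup>2"
      unfolding \<epsilon>'_def by (intro mult_right_mono) simp_all
    also have "\<dots> = (norm (A x))\<^sup>2 / 2" using x(2) by simp
    finally show False using \<open>A x \<noteq> 0\<close> by simp
  qed
  define y where "y = x - projection (spectral_subspace \<epsilon>') x"
  have "y \<in> spectral_subspace \<epsilon>"
    unfolding y_def by (intro closed_csubspace_diff closed_csubspace_spectral_subspace x(1)
        projection_spectral_subspace_in)
  moreover have "y \<in> orthogonal_complement (spectral_subspace \<epsilon>')"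
    unfolding y_def by (rule projection_in(2)[OF closed_csubspace_spectral_subspace])
  moreover have "y \<noteq> 0"
    using \<open>x \<notin> spectral_subspace \<epsilon>'\<close> projection_in(1)[OF closed_csubspace_spectral_subspace]
    unfolding y_def by (metis eq_iff_diff_eq_0)
  ultimately show ?thesis using \<epsilon>' by blast
qed

definition next_level :: "real \<Rightarrow> real" where
  "next_level \<epsilon> = (SOME \<epsilon>'. 0 < \<epsilon>' \<and> \<epsilon>' \<le> \<epsilon> / 2
    \<and> (\<exists>y. y \<noteq> 0 \<and> y \<in> spectral_subspace \<epsilon> \<and> y \<in> orthogonal_complement (spectral_subspace \<epsilon>')))"

primrec level :: "nat \<Rightarrow> real" where
  "level 0 = 1"
| "level (Suc n) = next_level (level n)"

lemma level_pos: "level n > 0"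
  and level_Suc: "level (Suc n) \<le> level n / 2"
  and level_gap_nontrivial: "\<exists>y. y \<noteq> 0 \<and> y \<in> spectral_subspace (level n)
      \<and> y \<in> orthogonal_complement (spectral_subspace (level (Suc n)))"
proof -
  have step: "0 < next_level \<epsilon> \<and> next_level \<epsilon> \<le> \<epsilon> / 2 \<and> (\<exists>y. y \<noteq> 0
      \<and> y \<in> spectral_subspace \<epsilon> \<and> y \<in> orthogonal_complement (spectral_subspace (next_level \<epsilon>)))"
    if "\<epsilon> > 0" for \<epsilon>
    unfolding next_level_def by (rule someI_ex[OF exists_next_level[OF that]])
  have "level n > 0" for n by (induction n) (simp_all add: step)
  then show "level n > 0" "level (Suc n) \<le> level n / 2"
    "\<exists>y. y \<noteq> 0 \<and> y \<in> spectral_subspace (level n)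
      \<and> y \<in> orthogonal_complement (spectral_subspace (level (Suc n)))"
    using step by simp_all
qed

lemma level_le_power: "level n \<le> (1/2) ^ n"
proof (induction n)
  case (Suc n)
  then show ?case using level_Suc[of n] by simp
qed simp

lemma level_strict_decreasing: "n < m \<Longrightarrow> level m < level n"
proof (induction m)
  case (Suc m)
  have "level (Suc m) < level m" using level_Suc[of m] level_pos[of m] by linarith
  then show ?case using Suc by (cases "n = m") auto
qed simp

definition layer :: "nat \<Rightarrow> 'a set" where
  "layer n = spectral_subspace (level n) \<inter> orthogonal_complement (spectral_subspace (level (Suc n)))"

lemma layer_invariant: "x \<in> layer n \<Longrightarrow> A x \<in> layer n"
  unfolding layer_def
  using spectral_subspace_invariant orthogonal_complement_invariant[OF selfadjoint spectral_subspace_invariant]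
  by blast

lemma norm_le_on_layer: "x \<in> layer n \<Longrightarrow> (norm (A x))\<^sup>2 \<le> level n * (norm x)\<^sup>2"
  unfolding layer_def using norm_le_on_spectral_subspace by blast

lemma layer_nontrivial: "\<exists>y\<in>layer n. y \<noteq> 0"
  using level_gap_nontrivial[of n] unfolding layer_def by blast

lemma layers_orthogonal:
  assumes "n \<noteq> m" "u \<in> layer n" "v \<in> layer m"
  shows "cinner u v = 0"
proof -
  have one_sided: "cinner v u = 0" if "n < m" "u \<in> layer n" "v \<in> layer m" for n m u v
  proof -
    have "v \<in> spectral_subspace (level (Suc n))"
    proof (cases "m = Suc n")
      case False
      then have "level m < level (Suc n)" using \<open>n < m\<close> by (intro level_strict_decreasing) simp
      moreover have "v \<in> spectral_subspace (level m)" using \<open>v \<in> layer m\<close> by (simp add: layer_def)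
      ultimately show ?thesis by (rule spectral_subspace_mono)
    qed (use \<open>v \<in> layer m\<close> in \<open>simp add: layer_def\<close>)
    then show ?thesis using \<open>u \<in> layer n\<close> by (simp add: layer_def orthogonal_complement_iff)
  qed
  show ?thesis
  proof (cases "n < m")
    case True
    then have "cinner v u = 0" using one_sided assms(2,3) by blast
    then show ?thesis using cinner_eq_0_commute[of u v] by blast
  next
    case False
    then have "m < n" using assms(1) by simp
    then show ?thesis using one_sided assms(2,3) by blast
  qed
qed

end

section \<open>Grouping an orthogonal family of subspaces\<close>

text \<open>The subspaces \<open>D n\<close> with \<open>\<pi> n = j\<close> are gathered into the \<open>j\<close>-th piece; piece \<open>0\<close>
  is instead the orthogonal complement of all other pieces, so that the pieces always span.\<close>

definition grouped_subspace :: "(nat \<Rightarrow> 'a::complex_hilbert set) \<Rightarrow> (nat \<Rightarrow> nat) \<Rightarrow> nat \<Rightarrow> 'a set"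
  where "grouped_subspace D \<pi> j = (if j = 0 then orthogonal_complement (\<Union>n\<in>{n. \<pi> n \<noteq> 0}. D n)
    else closure (cspan (\<Union>n\<in>{n. \<pi> n = j}. D n)))"

lemma closed_csubspace_grouped_subspace: "closed_csubspace (grouped_subspace D \<pi> j)"
  by (simp add: grouped_subspace_def closed_csubspace_orthogonal_complement
      closed_csubspace_closure_cspan)

lemma grouped_subspace_invariant:
  assumes A: "bounded_clinear A" "selfadjoint A" and D: "\<And>n x. x \<in> D n \<Longrightarrow> A x \<in> D n"
    and x: "x \<in> grouped_subspace D \<pi> j"
  shows "A x \<in> grouped_subspace D \<pi> j"
proof (cases "j = 0")
  case True
  then show ?thesis
    using x orthogonal_complement_invariant[OF A(2), of "\<Union>n\<in>{n. \<pi> n \<noteq> 0}. D n"] D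
    by (auto simp: grouped_subspace_def)
next
  case False
  have "A y \<in> (\<Union>n\<in>{n. \<pi> n = j}. D n)" if "y \<in> (\<Union>n\<in>{n. \<pi> n = j}. D n)" for y
    using that D by blast
  then show ?thesis
    using x closure_cspan_invariant[OF A(1), of "\<Union>n\<in>{n. \<pi> n = j}. D n"] False
    by (simp add: grouped_subspace_def)
qed

locale orthogonal_family =
  fixes D :: "nat \<Rightarrow> 'a::complex_hilbert set"
  assumes orthogonal: "n \<noteq> m \<Longrightarrow> u \<in> D n \<Longrightarrow> v \<in> D m \<Longrightarrow> cinner u v = 0"
begin

lemma subset_orthogonal_complement_other: "n \<noteq> m \<Longrightarrow> D n \<subseteq> orthogonal_complement (D m)"
  using orthogonal by (auto simp: orthogonal_complement_iff')

lemma subset_grouped_subspace: "D n \<subseteq> grouped_subspace D \<pi> (\<pi> n)"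
proof (cases "\<pi> n = 0")
  case True
  then have "D n \<subseteq> orthogonal_complement (D n')" if "\<pi> n' \<noteq> 0" for n'
    using that by (intro subset_orthogonal_complement_other) auto
  then show ?thesis using True by (auto simp: grouped_subspace_def orthogonal_complement_def)
next
  case False
  then show ?thesis using subset_closure_cspan by (fastforce simp: grouped_subspace_def)
qed

lemma grouped_subspace_subset_orthogonal_complement:
  assumes "j \<noteq> 0" "j \<noteq> l"
  shows "grouped_subspace D \<pi> j \<subseteq> orthogonal_complement (grouped_subspace D \<pi> l)"
proof -
  have "D n \<subseteq> orthogonal_complement (grouped_subspace D \<pi> l)" if "\<pi> n = j" for n
  proof (cases "l = 0")
    case True
    have "D n \<subseteq> (\<Union>n\<in>{n. \<pi> n \<noteq> 0}. D n)" using that assms(1) by blast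
    also have "\<dots> \<subseteq> orthogonal_complement (orthogonal_complement (\<Union>n\<in>{n. \<pi> n \<noteq> 0}. D n))"
      by (rule orthogonal_complement_swap[THEN iffD2, OF subset_refl])
    finally show ?thesis using True by (simp add: grouped_subspace_def)
  next
    case False
    have "D n' \<subseteq> orthogonal_complement (D n)" if "\<pi> n' = l" for n'
      using \<open>\<pi> n = j\<close> that assms(2) by (intro subset_orthogonal_complement_other) auto
    then have "(\<Union>n'\<in>{n'. \<pi> n' = l}. D n') \<subseteq> orthogonal_complement (D n)" by blast
    then have "closure (cspan (\<Union>n'\<in>{n'. \<pi> n' = l}. D n')) \<subseteq> orthogonal_complement (D n)"
      by (rule closure_cspan_subset[OF closed_csubspace_orthogonal_complement])
    then have "grouped_subspace D \<pi> l \<subseteq> orthogonal_complement (D n)"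
      using False by (simp add: grouped_subspace_def)
    then show ?thesis by (rule orthogonal_complement_swap[THEN iffD1])
  qed
  then have "closure (cspan (\<Union>n\<in>{n. \<pi> n = j}. D n))
      \<subseteq> orthogonal_complement (grouped_subspace D \<pi> l)"
    by (intro closure_cspan_subset[OF closed_csubspace_orthogonal_complement]) blast
  then show ?thesis using assms(1) by (simp add: grouped_subspace_def)
qed

lemma grouped_subspaces_orthogonal:
  assumes "j \<noteq> l" "x \<in> grouped_subspace D \<pi> j" "y \<in> grouped_subspace D \<pi> l"
  shows "cinner x y = 0"
proof (cases "j = 0")
  case False
  then have "x \<in> orthogonal_complement (grouped_subspace D \<pi> l)"
    using grouped_subspace_subset_orthogonal_complement[OF False assms(1)] assms(2) by blast
  then show ?thesis using assms(3) by (simp add: orthogonal_complement_iff')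
next
  case True
  then have "l \<noteq> 0" using assms(1) by simp
  then have "y \<in> orthogonal_complement (grouped_subspace D \<pi> j)"
    using grouped_subspace_subset_orthogonal_complement[OF _ assms(1)[symmetric]] assms(3) by blast
  then show ?thesis using assms(2) by (simp add: orthogonal_complement_iff)
qed

lemma closure_cspan_grouped_subspaces:
  assumes "0 \<in> I" "\<And>n. \<pi> n \<in> I"
  shows "closure (cspan (\<Union>j\<in>I. grouped_subspace D \<pi> j)) = UNIV"
proof -
  let ?U = "\<Union>j\<in>I. grouped_subspace D \<pi> j"
  have "x \<in> closure (cspan ?U)" for x
  proof (rule mem_if_orthogonal_to_complement[OF closed_csubspace_closure_cspan])
    fix y assume y: "y \<in> orthogonal_complement (closure (cspan ?U))"
    \<comment> \<open>\<open>y\<close> is orthogonal to every \<open>D n\<close>, so it lies in piece \<open>0\<close> and thus in the span\<close>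
    have D_sub: "D n \<subseteq> closure (cspan ?U)" for n
      using subset_grouped_subspace[of n \<pi>] assms(2)[of n] subset_closure_cspan[of ?U] by blast
    have "y \<in> orthogonal_complement (D n)" for n
      using orthogonal_complement_antimono[OF D_sub] y by blast
    then have "y \<in> grouped_subspace D \<pi> 0"
      by (auto simp: grouped_subspace_def orthogonal_complement_def)
    then have "y \<in> closure (cspan ?U)" using assms(1) subset_closure_cspan[of ?U] by blast
    then have "y = 0" using y by (rule orthogonal_complement_Int)
    then show "cinner y x = 0" by simp
  qed
  then show ?thesis by blast
qed

end

context injective_noninvertible_op
begin

lemma exists_invariant_decomposition:
  fixes I :: "nat set" and \<pi> :: "nat \<Rightarrow> nat"
  assumes "0 \<in> I" and \<pi>: "\<And>n. \<pi> n \<in> I" "\<And>j N. j \<in> I \<Longrightarrow> \<exists>n\<ge>N. \<pi> n = j"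
  shows "\<exists>K :: nat \<Rightarrow> 'a set. orthogonal_sum K I
    \<and> (\<forall>j\<in>I. closed_csubspace (K j) \<and> A ` K j \<subseteq> K j
          \<and> self_adjoint_on (K j) A \<and> inj_on A (K j) \<and> \<not> invertible_on (K j) A)"
proof -
  interpret layers: orthogonal_family layer by unfold_locales (rule layers_orthogonal)
  define K where "K = grouped_subspace layer \<pi>"
  have invariant: "A x \<in> K j" if "x \<in> K j" for j x
    using grouped_subspace_invariant[OF bounded selfadjoint layer_invariant] that by (simp add: K_def)
  have "orthogonal_sum K I"
    unfolding orthogonal_sum_def K_def
    using layers.closure_cspan_grouped_subspaces[OF \<open>0 \<in> I\<close> \<pi>(1)]
    by (simp add: layers.grouped_subspaces_orthogonal)
  moreover have "\<not> invertible_on (K j) A" if "j \<in> I" for j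
  proof (rule not_invertible_on_if_approximate_kernel[OF _ invariant])
    fix \<delta> :: real assume "\<delta> > 0"
    \<comment> \<open>piece \<open>j\<close> contains layers of arbitrarily small level\<close>
    obtain N where N: "(1/2::real) ^ N < \<delta>" using real_arch_pow_inv[OF \<open>\<delta> > 0\<close>, of "1/2"] by auto
    obtain n where n: "n \<ge> N" "\<pi> n = j" using \<pi>(2)[OF \<open>j \<in> I\<close>] by blast
    obtain y where y: "y \<in> layer n" "y \<noteq> 0" using layer_nontrivial by blast
    have "level n \<le> (1/2) ^ n" by (rule level_le_power)
    also have "\<dots> \<le> (1/2) ^ N" by (rule power_decreasing[OF n(1)]) simp_all
    finally have "level n \<le> \<delta>" using N by simp
    then have "(norm (A y))\<^sup>2 \<le> \<delta> * (norm y)\<^sup>2"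
      using norm_le_on_layer[OF y(1)] mult_right_mono[of "level n" \<delta> "(norm y)\<^sup>2"] by simp
    moreover have "y \<in> K j"
      using layers.subset_grouped_subspace[of n \<pi>] y(1) n(2) by (auto simp: K_def)
    ultimately show "\<exists>x\<in>K j. x \<noteq> 0 \<and> (norm (A x))\<^sup>2 \<le> \<delta> * (norm x)\<^sup>2" using y(2) by blast
  qed
  moreover have "closed_csubspace (K j)" for j
    unfolding K_def by (rule closed_csubspace_grouped_subspace)
  moreover have "self_adjoint_on (K j) A" for j using selfadjoint by (simp add: self_adjoint_on_def)
  moreover have "inj_on A (K j)" for j using inj by (rule inj_on_subset) simp
  ultimately show ?thesis using invariant by blast
qed

end

lemma exists_index_map:
  assumes "0 < M"
  obtains \<pi> :: "nat \<Rightarrow> nat"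
  where "\<And>n. \<pi> n \<in> idx M" "\<And>j N. j \<in> idx M \<Longrightarrow> \<exists>n\<ge>N. \<pi> n = j"
proof (cases M)
  case (enat m)
  then have "m > 0" using assms by (simp add: zero_enat_def)
  show ?thesis
  proof (rule that[of "\<lambda>n. n mod m"])
    show "n mod m \<in> idx M" for n using \<open>m > 0\<close> by (simp add: idx_def enat)
    show "\<exists>n\<ge>N. n mod m = j" if "j \<in> idx M" for j N
      using that \<open>m > 0\<close> by (intro exI[of _ "j + m * N"]) (auto simp: idx_def enat trans_le_add2)
  qed
next
  case infinity
  show ?thesis
  proof (rule that[of "\<lambda>n. fst (prod_decode n)"])
    show "fst (prod_decode n) \<in> idx M" for n by (simp add: idx_def infinity)
    show "\<exists>n\<ge>N. fst (prod_decode n) = j" for j N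
      by (intro exI[of _ "prod_encode (j, N)"]) (simp add: le_prod_encode_2)
  qed
qed

lemma invertible_on_trivial_space:
  assumes "\<And>x::'a::complex_hilbert. x = 0"
  shows "invertible_on UNIV (A :: 'a \<Rightarrow> 'a)"
proof -
  have "A y = y" for y using assms[of "A y"] assms[of y] by simp
  then show ?thesis unfolding invertible_on_def using bounded_clinear_ident by auto
qed

lemma cyclic_multiplicity_nonzero:
  fixes A :: "'a::complex_hilbert \<Rightarrow> 'a"
  assumes "cyclic_multiplicity A N" "\<not> invertible_on UNIV A"
  shows "N \<noteq> 0"
proof
  assume "N = 0"
  then have "idx N = {}" by (simp add: idx_def zero_enat_def)
  with assms(1) have "closure (cspan {}) = (UNIV :: 'a set)"
    unfolding cyclic_multiplicity_def cyclic_decomposition_def orthogonal_sum_def by auto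
  then have "(UNIV :: 'a set) = {0}" by (simp add: closure_cspan_empty)
  then have "x = 0" for x :: 'a by (metis UNIV_I singletonD)
  then show False using assms(2) invertible_on_trivial_space by blast
qed

theorem mainTheorem5:
  fixes A :: "'a::complex_hilbert \<Rightarrow> 'a" and N M :: enat
  assumes "separable_space TYPE('a)"
    and "bounded_clinear_on UNIV A"
    and "self_adjoint_on UNIV A"
    and "inj A"
    and "\<not> invertible_on UNIV A"
    and "cyclic_multiplicity A N"
    and "N \<le> M"
  shows "\<exists>K :: nat \<Rightarrow> 'a set.
           orthogonal_sum K (idx M)
         \<and> (\<forall>j\<in>idx M. closed_csubspace (K j) \<and> A ` K j \<subseteq> K j
               \<and> self_adjoint_on (K j) A \<and> inj_on A (K j) \<and> \<not> invertible_on (K j) A)"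
proof -
  interpret injective_noninvertible_op A by unfold_locales (fact assms)+
  have "N \<noteq> 0" by (rule cyclic_multiplicity_nonzero[OF assms(6,5)])
  then have "0 < M" using assms(7) by (metis i0_less ile0_eq)
  then have "0 \<in> idx M" by (simp add: idx_def zero_enat_def)
  show ?thesis
  proof (rule exists_index_map[OF \<open>0 < M\<close>])
    fix \<pi> :: "nat \<Rightarrow> nat"
    assume "\<And>n. \<pi> n \<in> idx M" "\<And>j m. j \<in> idx M \<Longrightarrow> \<exists>n\<ge>m. \<pi> n = j"
    then show ?thesis by (rule exists_invariant_decomposition[OF \<open>0 \<in> idx M\<close>])
  qed
qed

end
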